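(* Assume $(\mathbf{H}_f)$ and $(\mathbf{H}_g)$, let $\eta\in C^{\beta\text{-Hol}}([-r,0],\mathbb{R}^d)$ and let $x$ be the solution of the delay equation on $[-r,T]$ with $x_0=\eta$. Let $C:=2(\|g(0)\|+L'+L_g(K+1))$ with $L':=\max\{L_f,\|f(0)\|\}$ and $K:=\frac{1}{1-2^{1-(\nu+\beta)}}$, fix $\mu\in(0,\min\{1,C\})$, and let $t_i$ and $N(t,\omega)$ be the associated stopping times and counting function. Then for every $t\in[0,T]$, $$\|x_t\|_{\infty,\beta,[-r,0]}\le (1-\mu)^{-(N(t,\omega)+1)}\big[\|\eta\|_{\infty,\beta,[-r,0]}+1\big].$$ Moreover, for every integer $k\ge1$ with $k(\nu-\beta)\ge1$, $$N(T,\omega)\le 2^{k-1}\Big(\frac{C}{\mu}\Big)^k\Big(T^{k(1-\beta)}+T^{k(\nu-\beta)}|||\omega|||^k_{\nu,[0,T]}\Big).$$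
   Context: $\|\cdot\|$ is the Euclidean norm; $r,T>0$; $C_r:=C([-r,0],\mathbb{R}^d)$ with sup norm; $x_t(u)=x(t+u)$, $u\in[-r,0]$. For $0<\alpha\le1$: $|||x|||_{\alpha,[a,b]}=\sup_{a\le s<t\le b}\frac{\|x(t)-x(s)\|}{(t-s)^\alpha}$, $\|x\|_{\infty,\alpha,[a,b]}=\sup_{[a,b]}\|x\|+|||x|||_{\alpha,[a,b]}$, $C^{\alpha\text{-Hol}}$ the space where finite. Parameters: $\nu\in(\tfrac12,1]$; $\omega\in C^{\nu\text{-Hol}}([0,T],\mathbb{R})$ with $\lim_{h\to0}\sup_{0\le s<t\le T,\,t-s\le h}\frac{|\omega(t)-\omega(s)|}{(t-s)^\nu}=0$; $\frac{1-\nu}{\nu}<\delta\le1$; $\beta\in(0,\nu)$ with $\beta\delta+\nu>1$. $(\mathbf{H}_f)$: $\|f(\xi)-f(\eta)\|\le L_f\|\xi-\eta\|_{\infty,[-r,0]}$ for $f:C_r\to\mathbb{R}^d$. $(\mathbf{H}_g)$: $g:C_r\to\mathbb{R}^d$ Fréchet $C^1$, $\|Dg\|\le L_g$, and for each $M>0$ there is $L_M$ with $\|Dg(\xi)-Dg(\eta)\|\le L_M\|\xi-\eta\|^\delta_{\infty,[-r,0]}$ for $\|\xi\|,\|\eta\|\le M$. The solution is the unique $x\in C^{\beta\text{-Hol}}([-r,T],\mathbb{R}^d)$ with $x_0=\eta$ and $x(t)=\eta(0)+\int_0^tf(x_s)ds+\int_0^tg(x_s)d\omega(s)$ (Young integral)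 for $t\in[0,T]$. Stopping times: given $C>0$ and $\mu\in(0,C)$, set $t_0=0$ and $t_{i+1}=\sup\{t\in[t_i,T]: C[(t-t_i)^{1-\beta}+(t-t_i)^{\nu-\beta}|||\omega|||_{\nu,[t_i,t]}]\le\mu\}$; the counting function is $N(t,\omega):=\#\{i\ge1: t_i<t\}$ for $t\in[0,T]$ (the number of stopping times in $(0,t)$). *)

theory Defs
  imports "HOL-Analysis.Analysis"
begin

text \<open>Supremum norm of x over [a,b] (0 is inserted so the empty/degenerate case is harmless).\<close>
definition sup_norm :: "real \<Rightarrow> real \<Rightarrow> (real \<Rightarrow> 'a::real_normed_vector) \<Rightarrow> real" where
  "sup_norm a b x = Sup (insert 0 ((\<lambda>t. norm (x t)) ` {a..b}))"

definition hol_quots :: "real \<Rightarrow> real \<Rightarrow> real \<Rightarrow> (real \<Rightarrow> 'a::real_normed_vector) \<Rightarrow> real set" where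
  "hol_quots \<alpha> a b x = {norm (x t - x s) / (t - s) powr \<alpha> | s t. a \<le> s \<and> s < t \<and> t \<le> b}"

definition hol_semi :: "real \<Rightarrow> real \<Rightarrow> real \<Rightarrow> (real \<Rightarrow> 'a::real_normed_vector) \<Rightarrow> real" where
  "hol_semi \<alpha> a b x = Sup (insert 0 (hol_quots \<alpha> a b x))"

definition holder_on :: "real \<Rightarrow> real \<Rightarrow> real \<Rightarrow> (real \<Rightarrow> 'a::real_normed_vector) \<Rightarrow> bool" where
  "holder_on \<alpha> a b x \<longleftrightarrow> bdd_above (hol_quots \<alpha> a b x)"

definition hol_norm :: "real \<Rightarrow> real \<Rightarrow> real \<Rightarrow> (real \<Rightarrow> 'a::real_normed_vector) \<Rightarrow> real" where
  "hol_norm \<alpha> a b x = sup_norm a b x + hol_semi \<alpha> a b x"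

text \<open>x_t(u) = x(t+u); only values for u in [-r,0] are relevant.\<close>
definition seg :: "(real \<Rightarrow> 'a) \<Rightarrow> real \<Rightarrow> real \<Rightarrow> 'a" where
  "seg x t = (\<lambda>u. x (t + u))"

text \<open>Elements of C_r are represented by functions continuous on [-r,0]; cr_norm is the sup norm.\<close>
definition in_Cr :: "real \<Rightarrow> (real \<Rightarrow> 'a::real_normed_vector) \<Rightarrow> bool" where
  "in_Cr r \<xi> \<longleftrightarrow> continuous_on {-r..0} \<xi>"

definition cr_norm :: "real \<Rightarrow> (real \<Rightarrow> 'a::real_normed_vector) \<Rightarrow> real" where
  "cr_norm r \<xi> = sup_norm (-r) 0 \<xi>"

text \<open>Dg is the Frechet derivative of g on C_r and g is C^1 (Dg continuous in operator norm).\<close>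
definition frechet_C1_Cr ::
  "real \<Rightarrow> ((real \<Rightarrow> 'a::real_normed_vector) \<Rightarrow> 'b::real_normed_vector)
     \<Rightarrow> ((real \<Rightarrow> 'a) \<Rightarrow> (real \<Rightarrow> 'a) \<Rightarrow> 'b) \<Rightarrow> bool" where
  "frechet_C1_Cr r g Dg \<longleftrightarrow>
     (\<forall>\<xi>. in_Cr r \<xi> \<longrightarrow>
        (\<forall>h1 h2 a b. in_Cr r h1 \<longrightarrow> in_Cr r h2 \<longrightarrow>
            Dg \<xi> (\<lambda>u. a *\<^sub>R h1 u + b *\<^sub>R h2 u) = a *\<^sub>R Dg \<xi> h1 + b *\<^sub>R Dg \<xi> h2)
      \<and> (\<exists>B. \<forall>h. in_Cr r h \<longrightarrow> norm (Dg \<xi> h) \<le> B * cr_norm r h)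
      \<and> (\<forall>\<epsilon>>0. \<exists>\<delta>>0. \<forall>h. in_Cr r h \<longrightarrow> cr_norm r h < \<delta> \<longrightarrow>
            norm (g (\<lambda>u. \<xi> u + h u) - g \<xi> - Dg \<xi> h) \<le> \<epsilon> * cr_norm r h)
      \<and> (\<forall>\<epsilon>>0. \<exists>\<delta>>0. \<forall>\<eta>. in_Cr r \<eta> \<longrightarrow> cr_norm r (\<lambda>u. \<eta> u - \<xi> u) < \<delta> \<longrightarrow>
            (\<forall>h. in_Cr r h \<longrightarrow> norm (Dg \<eta> h - Dg \<xi> h) \<le> \<epsilon> * cr_norm r h)))"

definition tagged_partition :: "real \<Rightarrow> real \<Rightarrow> real list \<Rightarrow> (nat \<Rightarrow> real) \<Rightarrow> bool" where
  "tagged_partition a b p \<tau> \<longleftrightarrow> p \<noteq> [] \<and> hd p = a \<and> last p = b \<and> sorted_wrt (<) p \<and>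
     (\<forall>i < length p - 1. p ! i \<le> \<tau> i \<and> \<tau> i \<le> p ! Suc i)"

definition mesh :: "real list \<Rightarrow> real" where
  "mesh p = Max (insert 0 {p ! Suc i - p ! i | i. i < length p - 1})"

definition rs_sum :: "(real \<Rightarrow> 'a::real_normed_vector) \<Rightarrow> (real \<Rightarrow> real) \<Rightarrow> real list \<Rightarrow> (nat \<Rightarrow> real) \<Rightarrow> 'a" where
  "rs_sum y \<omega> p \<tau> = (\<Sum>i < length p - 1. (\<omega> (p ! Suc i) - \<omega> (p ! i)) *\<^sub>R y (\<tau> i))"

definition has_young_integral :: "(real \<Rightarrow> 'a::real_normed_vector) \<Rightarrow> (real \<Rightarrow> real) \<Rightarrow> real \<Rightarrow> real \<Rightarrow> 'a \<Rightarrow> bool" where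
  "has_young_integral y \<omega> a b I \<longleftrightarrow>
     (\<forall>\<epsilon>>0. \<exists>\<delta>>0. \<forall>p \<tau>. tagged_partition a b p \<tau> \<longrightarrow> mesh p < \<delta> \<longrightarrow> norm (rs_sum y \<omega> p \<tau> - I) < \<epsilon>)"

primrec stop_time :: "real \<Rightarrow> real \<Rightarrow> real \<Rightarrow> real \<Rightarrow> (real \<Rightarrow> real) \<Rightarrow> real \<Rightarrow> nat \<Rightarrow> real" where
  "stop_time C \<mu> \<beta> \<nu> \<omega> T 0 = 0"
| "stop_time C \<mu> \<beta> \<nu> \<omega> T (Suc i) =
     (let ti = stop_time C \<mu> \<beta> \<nu> \<omega> T i in
      Sup {t \<in> {ti..T}. C * ((t - ti) powr (1 - \<beta>) + (t - ti) powr (\<nu> - \<beta>) * hol_semi \<nu> ti t \<omega>) \<le> \<mu>})"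

definition stop_set :: "real \<Rightarrow> real \<Rightarrow> real \<Rightarrow> real \<Rightarrow> (real \<Rightarrow> real) \<Rightarrow> real \<Rightarrow> real \<Rightarrow> nat set" where
  "stop_set C \<mu> \<beta> \<nu> \<omega> T t = {i. 1 \<le> i \<and> stop_time C \<mu> \<beta> \<nu> \<omega> T i < t}"

definition count_N :: "real \<Rightarrow> real \<Rightarrow> real \<Rightarrow> real \<Rightarrow> (real \<Rightarrow> real) \<Rightarrow> real \<Rightarrow> real \<Rightarrow> nat" where
  "count_N C \<mu> \<beta> \<nu> \<omega> T t = card (stop_set C \<mu> \<beta> \<nu> \<omega> T t)"

end

theory Submission
  imports Defs
begin

text \<open>Write A(t) for the \<beta>-Hoelder norm of x on [-r,t] and W(a,u) for the \<nu>-Hoelder seminorm of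
  \<omega> on [a,u]. On an interval [a,b] on which the control C ((u-a)^(1-\<beta>) + (u-a)^(\<nu>-\<beta>) W(a,u))
  stays below \<mu>, the drift integral and the Young integral (estimated against dyadic
  Riemann-Stieltjes sums, as in the Young-Loeve inequality) bound every increment of x by
  \<mu>/2 (1 + A(b)) (u-s)^\<beta>. Gluing with [-r,a] yields (1 + A(b))(1 - \<mu>) \<le> 1 + A(a), and iterating
  over the stopping times gives the geometric bound. For the counting estimate, each completed
  stopping interval has control at least \<mu>; by (p+q)^k \<le> 2^(k-1)(p^k+q^k) and k(\<nu>-\<beta>) \<ge> 1 its
  k-th power is bounded linearly in the length of the interval, and the lengths add up to at most T.\<close>

section \<open>Supremum norm and Hoelder seminorm\<close>

lemma bdd_above_norm_image:
  fixes x :: "real \<Rightarrow> 'a::real_normed_vector"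
  assumes "continuous_on {a..b} x"
  shows "bdd_above (insert 0 ((\<lambda>t. norm (x t)) ` {a..b}))"
proof -
  have "compact ((\<lambda>t. norm (x t)) ` {a..b})"
    using compact_Icc by (intro compact_continuous_image continuous_on_norm assms)
  then show ?thesis by (auto intro: bounded_imp_bdd_above compact_imp_bounded)
qed

lemma sup_norm_le:
  assumes "0 \<le> M" "\<And>t. t \<in> {a..b} \<Longrightarrow> norm (x t) \<le> M"
  shows "sup_norm a b x \<le> M"
  unfolding sup_norm_def using assms by (intro cSup_least) auto

lemma sup_norm_upper:
  assumes "continuous_on {a..b} x" "t \<in> {a..b}"
  shows "norm (x t) \<le> sup_norm a b x"
  unfolding sup_norm_def using assms bdd_above_norm_image[OF assms(1)] by (intro cSup_upper) auto

lemma sup_norm_nonneg: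
  assumes "continuous_on {a..b} x"
  shows "0 \<le> sup_norm a b x"
  unfolding sup_norm_def using bdd_above_norm_image[OF assms] by (intro cSup_upper) auto

lemma sup_norm_cong:
  assumes "\<And>t. t \<in> {a..b} \<Longrightarrow> x t = y t"
  shows "sup_norm a b x = sup_norm a b y"
  unfolding sup_norm_def using assms by (metis (no_types, lifting) image_cong)

lemma sup_norm_scaleR_le:
  assumes "continuous_on {a..b} x"
  shows "sup_norm a b (\<lambda>t. c *\<^sub>R x t) \<le> \<bar>c\<bar> * sup_norm a b x"
proof (rule sup_norm_le)
  show "0 \<le> \<bar>c\<bar> * sup_norm a b x" using sup_norm_nonneg[OF assms] by simp
  fix t assume "t \<in> {a..b}"
  then show "norm (c *\<^sub>R x t) \<le> \<bar>c\<bar> * sup_norm a b x"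
    using sup_norm_upper[OF assms] by (simp add: mult_left_mono)
qed

lemma hol_semi_cong:
  assumes "\<And>t. t \<in> {a..b} \<Longrightarrow> x t = y t"
  shows "hol_semi \<alpha> a b x = hol_semi \<alpha> a b y"
proof -
  have "x t - x s = y t - y s" if "a \<le> s" "s < t" "t \<le> b" for s t
    using that assms by simp
  then have "hol_quots \<alpha> a b x = hol_quots \<alpha> a b y"
    unfolding hol_quots_def by (intro Collect_cong ex_cong1) force
  then show ?thesis unfolding hol_semi_def by simp
qed

lemma hol_semi_nonneg:
  assumes "holder_on \<alpha> a b x"
  shows "0 \<le> hol_semi \<alpha> a b x"
  using assms unfolding hol_semi_def holder_on_def by (intro cSup_upper) auto

lemma hol_semi_upper:
  assumes "holder_on \<alpha> a b x" "a \<le> s" "s < t" "t \<le> b"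
  shows "norm (x t - x s) \<le> hol_semi \<alpha> a b x * (t - s) powr \<alpha>"
proof -
  have "norm (x t - x s) / (t - s) powr \<alpha> \<in> hol_quots \<alpha> a b x"
    unfolding hol_quots_def using assms by blast
  then have "norm (x t - x s) / (t - s) powr \<alpha> \<le> hol_semi \<alpha> a b x"
    using assms(1) unfolding hol_semi_def holder_on_def by (intro cSup_upper) auto
  moreover have "(t - s) powr \<alpha> > 0" using assms by simp
  ultimately show ?thesis by (simp add: divide_le_eq)
qed

lemma hol_semi_upper_abs:
  assumes "holder_on \<alpha> a b x" "s \<in> {a..b}" "t \<in> {a..b}"
  shows "norm (x t - x s) \<le> hol_semi \<alpha> a b x * \<bar>t - s\<bar> powr \<alpha>"
proof -
  consider "s < t" | "s = t" | "t < s" by linarith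
  then show ?thesis
  proof cases
    case 1
    then show ?thesis using hol_semi_upper[OF assms(1), of s t] assms(2,3) by simp
  next
    case 2
    then show ?thesis using hol_semi_nonneg[OF assms(1)] by simp
  next
    case 3
    then show ?thesis using hol_semi_upper[OF assms(1), of t s] assms(2,3)
      by (simp add: norm_minus_commute)
  qed
qed

lemma hol_semi_le:
  assumes "0 \<le> M" "\<And>s t. a \<le> s \<Longrightarrow> s < t \<Longrightarrow> t \<le> b \<Longrightarrow> norm (x t - x s) \<le> M * (t - s) powr \<alpha>"
  shows "hol_semi \<alpha> a b x \<le> M"
  unfolding hol_semi_def
proof (intro cSup_least)
  fix q assume "q \<in> insert 0 (hol_quots \<alpha> a b x)"
  then show "q \<le> M"
  proof
    assume "q \<in> hol_quots \<alpha> a b x"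
    then obtain s t where st: "a \<le> s" "s < t" "t \<le> b" "q = norm (x t - x s) / (t - s) powr \<alpha>"
      unfolding hol_quots_def by blast
    have "(t - s) powr \<alpha> > 0" using st by simp
    then show ?thesis using assms(2)[OF st(1-3)] st(4) by (simp add: divide_le_eq)
  qed (use assms in auto)
qed auto

lemma holder_on_subset:
  assumes "holder_on \<alpha> a b x" "a \<le> a'" "b' \<le> b"
  shows "holder_on \<alpha> a' b' x"
proof -
  have "hol_quots \<alpha> a' b' x \<subseteq> hol_quots \<alpha> a b x"
    unfolding hol_quots_def using assms(2,3) by force
  with assms(1) show ?thesis unfolding holder_on_def by (rule bdd_above_mono)
qed

lemma hol_semi_mono:
  assumes "holder_on \<alpha> a b x" "a \<le> a'" "b' \<le> b"
  shows "hol_semi \<alpha> a' b' x \<le> hol_semi \<alpha> a b x"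
  by (intro hol_semi_le hol_semi_nonneg[OF assms(1)] hol_semi_upper[OF assms(1)]) (use assms in auto)

lemma holder_bound_imp_continuous_on:
  fixes x :: "real \<Rightarrow> 'a::real_normed_vector"
  assumes "0 < \<alpha>" and bound: "\<And>s t. s \<in> S \<Longrightarrow> t \<in> S \<Longrightarrow> norm (x t - x s) \<le> H * \<bar>t - s\<bar> powr \<alpha>"
  shows "continuous_on S x"
  unfolding continuous_on_iff
proof (intro ballI allI impI)
  fix t e assume t: "t \<in> S" and e: "(0::real) < e"
  define d where "d = (e / (\<bar>H\<bar> + 1)) powr (1 / \<alpha>)"
  have "d > 0" using e unfolding d_def by simp
  moreover have "dist (x t') (x t) < e" if t': "t' \<in> S" "dist t' t < d" for t'
  proof -
    have "dist (x t') (x t) \<le> H * \<bar>t' - t\<bar> powr \<alpha>" using bound[OF t t'(1)] by (simp add: dist_norm)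
    also have "\<dots> \<le> (\<bar>H\<bar> + 1) * \<bar>t' - t\<bar> powr \<alpha>" by (intro mult_right_mono) auto
    also have "\<dots> < (\<bar>H\<bar> + 1) * d powr \<alpha>"
      using t' assms(1) by (intro mult_strict_left_mono powr_less_mono2) (auto simp: dist_real_def)
    also have "\<dots> = e" unfolding d_def using assms(1) e by (simp add: powr_powr)
    finally show ?thesis .
  qed
  ultimately show "\<exists>d>0. \<forall>t'\<in>S. dist t' t < d \<longrightarrow> dist (x t') (x t) < e" by blast
qed

lemma holder_on_imp_continuous_on:
  assumes "holder_on \<alpha> a b x" "0 < \<alpha>"
  shows "continuous_on {a..b} x"
  using assms(2) hol_semi_upper_abs[OF assms(1)] by (rule holder_bound_imp_continuous_on)

section \<open>Segments and functionals on C_r\<close>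

lemma cr_norm_nonneg: "in_Cr r \<xi> \<Longrightarrow> 0 \<le> cr_norm r \<xi>"
  unfolding in_Cr_def cr_norm_def by (rule sup_norm_nonneg)

lemma frechet_C1_Cr_scaleR:
  assumes "frechet_C1_Cr r g Dg" "in_Cr r \<xi>" "in_Cr r h"
  shows "Dg \<xi> (\<lambda>u. c *\<^sub>R h u) = c *\<^sub>R Dg \<xi> h"
  using conjunct1[OF assms(1)[unfolded frechet_C1_Cr_def, rule_format, OF assms(2)],
      rule_format, OF assms(3) assms(3), of c 0]
  by simp

lemma frechet_C1_Cr_remainder:
  assumes "frechet_C1_Cr r g Dg" "in_Cr r \<xi>" "0 < \<epsilon>"
  obtains \<delta> where "0 < \<delta>" "\<And>h. in_Cr r h \<Longrightarrow> cr_norm r h < \<delta> \<Longrightarrow>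
    norm (g (\<lambda>u. \<xi> u + h u) - g \<xi> - Dg \<xi> h) \<le> \<epsilon> * cr_norm r h"
  using conjunct1[OF conjunct2[OF conjunct2[OF assms(1)[unfolded frechet_C1_Cr_def, rule_format, OF assms(2)]]],
      rule_format, OF assms(3)]
  by blast

lemma frechet_C1_Cr_has_derivative_line:
  fixes g :: "(real \<Rightarrow> 'a::real_normed_vector) \<Rightarrow> 'b::real_normed_vector"
  assumes g: "frechet_C1_Cr r g Dg" and \<zeta>: "in_Cr r \<zeta>" and h: "in_Cr r h"
  defines "\<gamma> \<equiv> \<lambda>l u. \<zeta> u + l *\<^sub>R h u"
  shows "((\<lambda>l. g (\<gamma> l)) has_derivative (\<lambda>d. d *\<^sub>R Dg (\<gamma> l0) h)) (at l0 within S)"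
  unfolding has_derivative_within_alt
proof (intro conjI bounded_linear_scaleR_left allI impI)
  fix e :: real assume e: "0 < e"
  define N where "N = cr_norm r h"
  have N0: "0 \<le> N" unfolding N_def by (rule cr_norm_nonneg[OF h])
  have \<gamma>C: "in_Cr r (\<gamma> l0)" using \<zeta> h unfolding \<gamma>_def in_Cr_def by (intro continuous_intros)
  have "0 < e / (N + 1)" using e N0 by simp
  then obtain \<delta> where \<delta>: "\<delta> > 0" and rem: "\<And>h'. in_Cr r h' \<Longrightarrow> cr_norm r h' < \<delta> \<Longrightarrow>
      norm (g (\<lambda>u. \<gamma> l0 u + h' u) - g (\<gamma> l0) - Dg (\<gamma> l0) h') \<le> e / (N + 1) * cr_norm r h'"
    using frechet_C1_Cr_remainder[OF g \<gamma>C] by blast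
  show "\<exists>d>0. \<forall>y\<in>S. norm (y - l0) < d \<longrightarrow>
      norm (g (\<gamma> y) - g (\<gamma> l0) - (y - l0) *\<^sub>R Dg (\<gamma> l0) h) \<le> e * norm (y - l0)"
  proof (intro exI[of _ "\<delta> / (N + 1)"] conjI ballI impI)
    show "0 < \<delta> / (N + 1)" using \<delta> N0 by simp
    fix y :: real assume y: "norm (y - l0) < \<delta> / (N + 1)"
    define h' where "h' = (\<lambda>u. (y - l0) *\<^sub>R h u)"
    have h'C: "in_Cr r h'" using h unfolding h'_def in_Cr_def by (intro continuous_intros)
    have "cr_norm r h' \<le> \<bar>y - l0\<bar> * N"
      using sup_norm_scaleR_le h unfolding h'_def cr_norm_def N_def in_Cr_def by blast
    also have "\<dots> \<le> \<bar>y - l0\<bar> * (N + 1)" by (intro mult_left_mono) auto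
    finally have h'N: "cr_norm r h' \<le> \<bar>y - l0\<bar> * (N + 1)" .
    also have "\<dots> < \<delta>" using y N0 by (simp add: field_simps)
    finally have small: "cr_norm r h' < \<delta>" .
    have "(\<lambda>u. \<gamma> l0 u + h' u) = \<gamma> y"
      unfolding \<gamma>_def h'_def by (rule ext) (simp add: algebra_simps)
    moreover have "Dg (\<gamma> l0) h' = (y - l0) *\<^sub>R Dg (\<gamma> l0) h"
      unfolding h'_def by (rule frechet_C1_Cr_scaleR[OF g \<gamma>C h])
    ultimately have "norm (g (\<gamma> y) - g (\<gamma> l0) - (y - l0) *\<^sub>R Dg (\<gamma> l0) h)
        \<le> e / (N + 1) * cr_norm r h'"
      using rem[OF h'C small] by simp
    also have "\<dots> \<le> e / (N + 1) * (\<bar>y - l0\<bar> * (N + 1))"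
      using h'N e N0 by (intro mult_left_mono) auto
    also have "\<dots> = e * norm (y - l0)" using N0 by simp
    finally show "norm (g (\<gamma> y) - g (\<gamma> l0) - (y - l0) *\<^sub>R Dg (\<gamma> l0) h) \<le> e * norm (y - l0)" .
  qed
qed

lemma frechet_C1_Cr_lipschitz:
  fixes g :: "(real \<Rightarrow> 'a::real_normed_vector) \<Rightarrow> 'b::real_normed_vector"
  assumes g: "frechet_C1_Cr r g Dg"
    and Dg_le: "\<forall>\<xi> h. in_Cr r \<xi> \<and> in_Cr r h \<longrightarrow> norm (Dg \<xi> h) \<le> L * cr_norm r h"
    and \<xi>: "in_Cr r \<xi>" and \<zeta>: "in_Cr r \<zeta>"
  shows "norm (g \<xi> - g \<zeta>) \<le> L * cr_norm r (\<lambda>u. \<xi> u - \<zeta> u)"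
proof -
  define h where "h = (\<lambda>u. \<xi> u - \<zeta> u)"
  define \<gamma> where "\<gamma> = (\<lambda>l u. \<zeta> u + l *\<^sub>R h u)"
  have h: "in_Cr r h" using \<xi> \<zeta> unfolding h_def in_Cr_def by (intro continuous_intros)
  have "onorm (\<lambda>d. d *\<^sub>R Dg (\<gamma> l) h) \<le> L * cr_norm r h" for l
  proof -
    have "in_Cr r (\<gamma> l)" using \<zeta> h unfolding \<gamma>_def in_Cr_def by (intro continuous_intros)
    then show ?thesis
      using Dg_le h by (simp add: onorm_scaleR_left[OF bounded_linear_ident] onorm_id)
  qed
  then have "norm (g (\<gamma> 1) - g (\<gamma> 0)) \<le> L * cr_norm r h * norm (1 - (0::real))"
    using frechet_C1_Cr_has_derivative_line[OF g \<zeta> h] unfolding \<gamma>_def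
    by (intro differentiable_bound[OF convex_real_interval(5), of 0 1]) auto
  moreover have "\<gamma> 1 = \<xi>" "\<gamma> 0 = \<zeta>" unfolding \<gamma>_def h_def by auto
  ultimately show ?thesis unfolding h_def by simp
qed

lemma operator_bound_nonneg:
  fixes D :: "(real \<Rightarrow> 'a::euclidean_space) \<Rightarrow> (real \<Rightarrow> 'a) \<Rightarrow> 'b::real_normed_vector"
  assumes "r > 0" and "\<forall>\<xi> h. in_Cr r \<xi> \<and> in_Cr r h \<longrightarrow> norm (D \<xi> h) \<le> L * cr_norm r h"
  shows "0 \<le> L"
proof -
  obtain b :: 'a where b: "b \<in> Basis" using nonempty_Basis by blast
  have C: "in_Cr r (\<lambda>_. b)" unfolding in_Cr_def by simp
  have "norm b \<le> cr_norm r (\<lambda>_. b)"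
    unfolding cr_norm_def using sup_norm_upper[of "-r" 0 "\<lambda>_. b" 0] assms(1) by simp
  then have "1 \<le> cr_norm r (\<lambda>_. b)" using b by simp
  moreover have "0 \<le> L * cr_norm r (\<lambda>_. b)" using assms(2) C by (meson norm_ge_zero order_trans)
  ultimately show ?thesis by (simp add: zero_le_mult_iff)
qed

lemma lipschitz_norm_le:
  assumes "\<forall>\<xi> \<zeta>. in_Cr r \<xi> \<and> in_Cr r \<zeta> \<longrightarrow> norm (f \<xi> - f \<zeta>) \<le> L * cr_norm r (\<lambda>u. \<xi> u - \<zeta> u)"
    and "in_Cr r \<xi>"
  shows "norm (f \<xi>) \<le> norm (f (\<lambda>_. 0)) + L * cr_norm r \<xi>"
proof -
  have "in_Cr r (\<lambda>_. 0)" unfolding in_Cr_def by simp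
  then have "norm (f \<xi> - f (\<lambda>_. 0)) \<le> L * cr_norm r \<xi>" using assms by force
  then show ?thesis using norm_triangle_ineq2[of "f \<xi>" "f (\<lambda>_. 0)"] by linarith
qed

lemma in_Cr_seg:
  assumes "continuous_on {-r..t} x" "0 \<le> v" "v \<le> t"
  shows "in_Cr r (seg x v)"
  unfolding in_Cr_def seg_def
  by (rule continuous_on_compose2[OF assms(1), of _ "\<lambda>u. v + u"]) (use assms in \<open>auto intro!: continuous_intros\<close>)

lemma cr_norm_seg_le:
  assumes "continuous_on {-r..t} x" "0 \<le> v" "v \<le> t"
  shows "cr_norm r (seg x v) \<le> sup_norm (-r) t x"
  unfolding cr_norm_def seg_def
  by (rule sup_norm_le) (use assms sup_norm_nonneg[OF assms(1)] in \<open>auto intro!: sup_norm_upper[OF assms(1)]\<close>)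

lemma cr_norm_seg_diff_le:
  assumes "holder_on \<beta> (-r) t x" "v \<in> {0..t}" "w \<in> {0..t}"
  shows "cr_norm r (\<lambda>u. seg x v u - seg x w u) \<le> hol_semi \<beta> (-r) t x * \<bar>v - w\<bar> powr \<beta>"
  unfolding cr_norm_def
proof (rule sup_norm_le)
  show "0 \<le> hol_semi \<beta> (-r) t x * \<bar>v - w\<bar> powr \<beta>" using hol_semi_nonneg[OF assms(1)] by simp
  fix u assume "u \<in> {-r..0}"
  then have "norm (x (v + u) - x (w + u)) \<le> hol_semi \<beta> (-r) t x * \<bar>(v + u) - (w + u)\<bar> powr \<beta>"
    using assms(2,3) by (intro hol_semi_upper_abs[OF assms(1)]) auto
  then show "norm (seg x v u - seg x w u) \<le> hol_semi \<beta> (-r) t x * \<bar>v - w\<bar> powr \<beta>"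
    unfolding seg_def by simp
qed

lemma hol_norm_seg_le:
  assumes "holder_on \<beta> (-r) t x" "0 \<le> t" "0 < \<beta>"
  shows "hol_norm \<beta> (-r) 0 (seg x t) \<le> hol_norm \<beta> (-r) t x"
proof -
  have "sup_norm (-r) 0 (seg x t) \<le> sup_norm (-r) t x"
    using cr_norm_seg_le[OF holder_on_imp_continuous_on[OF assms(1,3)] assms(2) order_refl]
    unfolding cr_norm_def .
  moreover have "hol_semi \<beta> (-r) 0 (seg x t) \<le> hol_semi \<beta> (-r) t x"
  proof (rule hol_semi_le[OF hol_semi_nonneg[OF assms(1)]])
    fix s u :: real assume su: "-r \<le> s" "s < u" "u \<le> 0"
    have "norm (x (t + u) - x (t + s)) \<le> hol_semi \<beta> (-r) t x * ((t + u) - (t + s)) powr \<beta>"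
      by (rule hol_semi_upper[OF assms(1)]) (use su assms(2) in auto)
    then show "norm (seg x t u - seg x t s) \<le> hol_semi \<beta> (-r) t x * (u - s) powr \<beta>"
      unfolding seg_def by simp
  qed
  ultimately show ?thesis unfolding hol_norm_def by simp
qed

section \<open>Riemann-Stieltjes sums and the Young-Loeve estimate\<close>

definition left_point_sum :: "(real \<Rightarrow> 'a::real_normed_vector) \<Rightarrow> (real \<Rightarrow> real) \<Rightarrow> (nat \<Rightarrow> real) \<Rightarrow> nat \<Rightarrow> 'a" where
  "left_point_sum Y \<omega> \<phi> k = (\<Sum>i<k. (\<omega> (\<phi> (Suc i)) - \<omega> (\<phi> i)) *\<^sub>R Y (\<phi> i))"

definition fine_steps :: "real \<Rightarrow> real \<Rightarrow> real \<Rightarrow> (nat \<Rightarrow> real) \<Rightarrow> nat \<Rightarrow> bool" where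
  "fine_steps \<delta> a b \<phi> k \<longleftrightarrow> \<phi> 0 = a \<and> \<phi> k = b \<and> (\<forall>i<k. \<phi> i < \<phi> (Suc i) \<and> \<phi> (Suc i) - \<phi> i < \<delta>)"

lemma tagged_partition_map:
  fixes \<phi> :: "nat \<Rightarrow> real"
  assumes "fine_steps \<delta> a b \<phi> k"
  shows "tagged_partition a b (map \<phi> [0..<Suc k]) (\<lambda>i. map \<phi> [0..<Suc k] ! i)"
proof -
  have step: "\<And>i. i < k \<Longrightarrow> \<phi> i < \<phi> (Suc i)" and ends: "\<phi> 0 = a" "\<phi> k = b"
    using assms unfolding fine_steps_def by auto
  have "\<phi> i < \<phi> j" if "i < j" "j \<le> k" for i j
    using that
  proof (induction j)
    case (Suc j)
    then show ?case using step[of j] by (cases "i = j") auto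
  qed simp
  then have "sorted_wrt (<) (map \<phi> [0..<Suc k])"
    unfolding sorted_wrt_iff_nth_less by (auto simp del: upt_Suc simp: nth_append)
  moreover have "last (map \<phi> [0..<Suc k]) = b" using ends by (simp del: upt_Suc add: last_map)
  ultimately show ?thesis unfolding tagged_partition_def using ends step
    by (auto simp del: upt_Suc simp: hd_map nth_append less_imp_le)
qed

lemma mesh_map_less:
  assumes "fine_steps \<delta> a b \<phi> k" "0 < \<delta>"
  shows "mesh (map \<phi> [0..<Suc k]) < \<delta>"
  using assms unfolding mesh_def fine_steps_def
  by (subst Max_less_iff) (auto simp del: upt_Suc simp: nth_append)

lemma rs_sum_map:
  "rs_sum Y \<omega> (map \<phi> [0..<Suc k]) (\<lambda>i. map \<phi> [0..<Suc k] ! i) = left_point_sum Y \<omega> \<phi> k"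
  unfolding rs_sum_def left_point_sum_def by (intro sum.cong) (auto simp del: upt_Suc simp: nth_append)

lemma has_young_integral_left_point_sum:
  assumes "has_young_integral Y \<omega> a b I" "0 < e"
  obtains \<delta> where "0 < \<delta>" "\<And>\<phi> k. fine_steps \<delta> a b \<phi> k \<Longrightarrow> norm (left_point_sum Y \<omega> \<phi> k - I) < e"
  using assms unfolding has_young_integral_def
  by (metis rs_sum_map tagged_partition_map mesh_map_less)

lemma fine_steps_exist:
  assumes "a \<le> b" "0 < \<delta>"
  obtains \<phi> k where "fine_steps \<delta> a b \<phi> k"
proof (cases "a = b")
  case True
  then show ?thesis using that[of "\<lambda>_. a" 0] unfolding fine_steps_def by simp
next
  case False
  obtain k :: nat where k: "(b - a) / \<delta> < real k" using reals_Archimedean2 by blast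
  have "0 < (b - a) / \<delta>" using assms False by simp
  with k have k0: "0 < real k" by linarith
  define \<phi> where "\<phi> = (\<lambda>i. a + (b - a) * real i / real k)"
  have step: "\<phi> (Suc i) - \<phi> i = (b - a) / real k" for i
    unfolding \<phi>_def using k0 by (simp add: field_simps)
  moreover have "(b - a) / real k < \<delta>" using k k0 assms(2) by (simp add: field_simps)
  moreover have "\<phi> i < \<phi> (Suc i)" for i
  proof -
    have "0 < (b - a) / real k" using assms False k0 by simp
    then show ?thesis using step[of i] by linarith
  qed
  moreover have "\<phi> 0 = a" "\<phi> k = b" unfolding \<phi>_def using k0 by auto
  ultimately have "fine_steps \<delta> a b \<phi> k" unfolding fine_steps_def by simp
  then show ?thesis by (rule that)
qed

lemma fine_steps_append:
  assumes "fine_steps \<delta> a b \<phi> m" "fine_steps \<delta> b c \<psi> k"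
  shows "fine_steps \<delta> a c (\<lambda>i. if i \<le> m then \<phi> i else \<psi> (i - m)) (m + k)"
    and "left_point_sum Y \<omega> (\<lambda>i. if i \<le> m then \<phi> i else \<psi> (i - m)) (m + k)
           = left_point_sum Y \<omega> \<phi> m + left_point_sum Y \<omega> \<psi> k"
proof -
  define \<kappa> where "\<kappa> = (\<lambda>i. if i \<le> m then \<phi> i else \<psi> (i - m))"
  have lo: "\<kappa> i = \<phi> i" if "i \<le> m" for i using that unfolding \<kappa>_def by simp
  have hi: "\<kappa> (m + j) = \<psi> j" for j
    using assms unfolding \<kappa>_def fine_steps_def by (cases j) auto
  have "\<kappa> i < \<kappa> (Suc i) \<and> \<kappa> (Suc i) - \<kappa> i < \<delta>" if i: "i < m + k" for i
  proof (cases "i < m")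
    case True then show ?thesis using assms(1) lo[of i] lo[of "Suc i"] unfolding fine_steps_def by simp
  next
    case False
    then have "i = m + (i - m)" "Suc i = m + Suc (i - m)" "i - m < k" using i by auto
    then show ?thesis using assms(2) hi[of "i - m"] hi[of "Suc (i - m)"] unfolding fine_steps_def by metis
  qed
  moreover have "\<kappa> 0 = a" using assms(1) lo[of 0] unfolding fine_steps_def by simp
  moreover have "\<kappa> (m + k) = c" using assms(2) hi[of k] unfolding fine_steps_def by simp
  ultimately show "fine_steps \<delta> a c \<kappa> (m + k)" unfolding fine_steps_def by blast
  have "left_point_sum Y \<omega> \<kappa> (m + k)
      = left_point_sum Y \<omega> \<kappa> m + (\<Sum>j<k. (\<omega> (\<kappa> (m + Suc j)) - \<omega> (\<kappa> (m + j))) *\<^sub>R Y (\<kappa> (m + j)))"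
    unfolding left_point_sum_def by (induction k) (simp_all add: add.assoc)
  also have "left_point_sum Y \<omega> \<kappa> m = left_point_sum Y \<omega> \<phi> m"
    unfolding left_point_sum_def by (intro sum.cong) (simp_all add: lo)
  finally show "left_point_sum Y \<omega> \<kappa> (m + k) = left_point_sum Y \<omega> \<phi> m + left_point_sum Y \<omega> \<psi> k"
    unfolding left_point_sum_def hi .
qed

lemma young_integral_increment_approx:
  assumes Iu: "has_young_integral Y \<omega> a u Iu" and Is: "has_young_integral Y \<omega> a s Is"
    and "a \<le> s" "0 < e"
  obtains \<delta> where "0 < \<delta>"
    "\<And>\<psi> k. fine_steps \<delta> s u \<psi> k \<Longrightarrow> norm (left_point_sum Y \<omega> \<psi> k - (Iu - Is)) < e"
proof -
  obtain \<delta>1 where \<delta>1: "0 < \<delta>1" "\<And>\<phi> k. fine_steps \<delta>1 a u \<phi> k \<Longrightarrow> norm (left_point_sum Y \<omega> \<phi> k - Iu) < e / 2"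
    using has_young_integral_left_point_sum[OF Iu] \<open>0 < e\<close> by (metis half_gt_zero)
  obtain \<delta>2 where \<delta>2: "0 < \<delta>2" "\<And>\<phi> k. fine_steps \<delta>2 a s \<phi> k \<Longrightarrow> norm (left_point_sum Y \<omega> \<phi> k - Is) < e / 2"
    using has_young_integral_left_point_sum[OF Is] \<open>0 < e\<close> by (metis half_gt_zero)
  define \<delta> where "\<delta> = min \<delta>1 \<delta>2"
  have mono: "fine_steps \<delta> a b \<phi> k \<Longrightarrow> fine_steps \<delta>' a b \<phi> k" if "\<delta> \<le> \<delta>'" for a b \<phi> k \<delta>'
    using that unfolding fine_steps_def by force
  obtain \<phi> m where \<phi>: "fine_steps \<delta> a s \<phi> m"
    using fine_steps_exist[OF \<open>a \<le> s\<close>] \<delta>1(1) \<delta>2(1) unfolding \<delta>_def by (metis min_less_iff_conj)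
  show ?thesis
  proof (rule that)
    show "0 < \<delta>" using \<delta>1(1) \<delta>2(1) unfolding \<delta>_def by simp
    fix \<psi> k assume \<psi>: "fine_steps \<delta> s u \<psi> k"
    have "norm (left_point_sum Y \<omega> \<phi> m + left_point_sum Y \<omega> \<psi> k - Iu) < e / 2"
      using \<delta>1(2)[OF mono[OF _ fine_steps_append(1)[OF \<phi> \<psi>]]]
      unfolding fine_steps_append(2)[OF \<phi> \<psi>] \<delta>_def by simp
    moreover have "norm (left_point_sum Y \<omega> \<phi> m - Is) < e / 2"
      using \<delta>2(2)[OF mono[OF _ \<phi>]] unfolding \<delta>_def by simp
    ultimately show "norm (left_point_sum Y \<omega> \<psi> k - (Iu - Is)) < e"
      using norm_diff_triangle_less[of "left_point_sum Y \<omega> \<phi> m + left_point_sum Y \<omega> \<psi> k - Iu"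
          0 "e / 2" "left_point_sum Y \<omega> \<phi> m - Is" "e / 2"]
      by (simp add: algebra_simps norm_minus_commute)
  qed
qed

definition dyadic_points :: "real \<Rightarrow> real \<Rightarrow> nat \<Rightarrow> nat \<Rightarrow> real" where
  "dyadic_points s h n j = s + h * real j / 2 ^ n"

lemma sum_lessThan_double:
  fixes f :: "nat \<Rightarrow> 'a::comm_monoid_add"
  shows "(\<Sum>i<2 * k. f i) = (\<Sum>j<k. f (2 * j) + f (2 * j + 1))"
proof (induction k)
  case (Suc k)
  have "2 * Suc k = Suc (Suc (2 * k))" by simp
  then show ?case using Suc by (simp add: algebra_simps)
qed simp

lemma dyadic_refinement_le:
  fixes Y :: "real \<Rightarrow> 'a::real_normed_vector"
  assumes "0 < h" "0 \<le> Ay" "0 \<le> Aw"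
    and Hy: "\<And>v w. v \<in> {s..s+h} \<Longrightarrow> w \<in> {s..s+h} \<Longrightarrow> norm (Y v - Y w) \<le> Ay * \<bar>v - w\<bar> powr \<beta>"
    and Hw: "\<And>v w. v \<in> {s..s+h} \<Longrightarrow> w \<in> {s..s+h} \<Longrightarrow> \<bar>\<omega> v - \<omega> w\<bar> \<le> Aw * \<bar>v - w\<bar> powr \<nu>"
  shows "norm (left_point_sum Y \<omega> (dyadic_points s h (Suc n)) (2 ^ Suc n)
               - left_point_sum Y \<omega> (dyadic_points s h n) (2 ^ n))
         \<le> Ay * Aw * (2 ^ n * (h / 2 ^ Suc n) powr (\<beta> + \<nu>))"
proof -
  define x where "x = dyadic_points s h n"
  define m where "m = (\<lambda>j. dyadic_points s h (Suc n) (2 * j + 1))"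
  define e where "e = h / 2 ^ Suc n"
  have e0: "0 < e" using assms(1) unfolding e_def by simp
  have even: "dyadic_points s h (Suc n) (2 * j) = x j" for j
    unfolding x_def dyadic_points_def by (simp add: field_simps)
  have odd: "dyadic_points s h (Suc n) (Suc (2 * j + 1)) = x (Suc j)" for j
    unfolding x_def dyadic_points_def by (simp add: field_simps)
  have half: "m j - x j = e" "x (Suc j) - m j = e" for j
    unfolding m_def x_def e_def dyadic_points_def by (simp_all add: field_simps)
  have x_in: "x j \<in> {s..s+h}" if "j \<le> 2 ^ n" for j
  proof -
    have "h * (real j / 2 ^ n) \<le> h * 1" using that assms(1) by (intro mult_left_mono) (auto simp: field_simps)
    then show ?thesis using assms(1) unfolding x_def dyadic_points_def by auto
  qed
  have "left_point_sum Y \<omega> (dyadic_points s h (Suc n)) (2 * 2 ^ n)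
      = (\<Sum>j<2 ^ n. (\<omega> (m j) - \<omega> (x j)) *\<^sub>R Y (x j) + (\<omega> (x (Suc j)) - \<omega> (m j)) *\<^sub>R Y (m j))"
    unfolding left_point_sum_def sum_lessThan_double m_def
    by (intro sum.cong refl) (metis even odd Suc_eq_plus1 mult_Suc_right)
  then have "left_point_sum Y \<omega> (dyadic_points s h (Suc n)) (2 ^ Suc n) - left_point_sum Y \<omega> x (2 ^ n)
      = (\<Sum>j<2 ^ n. (\<omega> (x (Suc j)) - \<omega> (m j)) *\<^sub>R (Y (m j) - Y (x j)))"
    unfolding left_point_sum_def by (simp add: sum_subtractf[symmetric] algebra_simps)
  also have "norm \<dots> \<le> (\<Sum>j<(2::nat) ^ n. Aw * e powr \<nu> * (Ay * e powr \<beta>))"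
  proof (rule order_trans[OF norm_sum sum_mono])
    fix j :: nat assume "j \<in> {..<2 ^ n}"
    then have in1: "x j \<in> {s..s+h}" "x (Suc j) \<in> {s..s+h}" using x_in by auto
    then have in2: "m j \<in> {s..s+h}" using half[of j] e0 by auto
    have "\<bar>\<omega> (x (Suc j)) - \<omega> (m j)\<bar> * norm (Y (m j) - Y (x j))
        \<le> (Aw * \<bar>x (Suc j) - m j\<bar> powr \<nu>) * (Ay * \<bar>m j - x j\<bar> powr \<beta>)"
      by (intro mult_mono Hw Hy in1 in2) (use assms(3) in auto)
    then show "norm ((\<omega> (x (Suc j)) - \<omega> (m j)) *\<^sub>R (Y (m j) - Y (x j)))
        \<le> Aw * e powr \<nu> * (Ay * e powr \<beta>)" using half[of j] e0 by simp
  qed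
  also have "\<dots> = Ay * Aw * (2 ^ n * e powr (\<beta> + \<nu>))"
    using e0 by (simp add: powr_add algebra_simps)
  finally show ?thesis unfolding x_def e_def .
qed

lemma two_pow_mult_powr:
  fixes h \<theta> :: real
  assumes "0 < h"
  shows "2 ^ n * (h / 2 ^ Suc n) powr \<theta> = h powr \<theta> * 2 powr (-\<theta>) * (2 powr (1 - \<theta>)) ^ n"
proof -
  have "2 ^ n * (h / 2 ^ Suc n) powr \<theta> = h powr \<theta> * (2 powr real n / (2 powr real (Suc n)) powr \<theta>)"
    using assms by (simp add: powr_divide powr_realpow del: of_nat_Suc)
  also have "2 powr real n / (2 powr real (Suc n)) powr \<theta> = (2::real) powr (-\<theta> + real n * (1 - \<theta>))"
    by (simp add: powr_powr powr_diff algebra_simps)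
  also have "\<dots> = 2 powr (-\<theta>) * (2 powr (1 - \<theta>)) ^ n"
    by (simp add: powr_power flip: powr_add)
  finally show ?thesis by simp
qed

lemma dyadic_left_point_sum_le:
  fixes Y :: "real \<Rightarrow> 'a::real_normed_vector"
  assumes h: "0 < h" and "0 \<le> Ay" "0 \<le> Aw" and \<theta>: "1 < \<beta> + \<nu>"
    and "\<And>v w. v \<in> {s..s+h} \<Longrightarrow> w \<in> {s..s+h} \<Longrightarrow> norm (Y v - Y w) \<le> Ay * \<bar>v - w\<bar> powr \<beta>"
    and "\<And>v w. v \<in> {s..s+h} \<Longrightarrow> w \<in> {s..s+h} \<Longrightarrow> \<bar>\<omega> v - \<omega> w\<bar> \<le> Aw * \<bar>v - w\<bar> powr \<nu>"
  shows "norm (left_point_sum Y \<omega> (dyadic_points s h n) (2 ^ n) - (\<omega> (s + h) - \<omega> s) *\<^sub>R Y s)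
         \<le> Ay * Aw * h powr (\<beta> + \<nu>) / (1 - 2 powr (1 - (\<beta> + \<nu>)))"
proof -
  define D where "D = (\<lambda>n. left_point_sum Y \<omega> (dyadic_points s h n) (2 ^ n))"
  define q :: real where "q = 2 powr (1 - (\<beta> + \<nu>))"
  have q: "0 \<le> q" "q < 1"
    unfolding q_def using \<theta> powr_less_cancel_iff[of 2 "1 - (\<beta> + \<nu>)" 0] by auto
  have D0: "D 0 = (\<omega> (s + h) - \<omega> s) *\<^sub>R Y s" unfolding D_def left_point_sum_def dyadic_points_def by simp
  have "norm (D n - D 0) = norm (\<Sum>j<n. D (Suc j) - D j)" by (simp add: sum_lessThan_telescope)
  also have "\<dots> \<le> (\<Sum>j<n. Ay * Aw * (h powr (\<beta> + \<nu>) * 2 powr (-(\<beta> + \<nu>)) * q ^ j))"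
    using dyadic_refinement_le[OF assms(1-3,5,6)] two_pow_mult_powr[OF h]
    unfolding D_def q_def by (intro order_trans[OF norm_sum sum_mono]) simp
  also have "\<dots> = Ay * Aw * h powr (\<beta> + \<nu>) * 2 powr (-(\<beta> + \<nu>)) * (\<Sum>j<n. q ^ j)"
    unfolding sum_distrib_left by (simp add: mult_ac)
  also have "\<dots> \<le> Ay * Aw * h powr (\<beta> + \<nu>) * 1 * (1 / (1 - q))"
  proof (intro mult_mono)
    have "(\<Sum>j<n. q ^ j) = (1 - q ^ n) / (1 - q)" using q by (simp add: sum_gp_strict)
    also have "\<dots> \<le> 1 / (1 - q)" using q by (intro divide_right_mono) auto
    finally show "(\<Sum>j<n. q ^ j) \<le> 1 / (1 - q)" .
    show "2 powr (-(\<beta> + \<nu>)) \<le> (1::real)"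
      using \<theta> powr_mono[of "-(\<beta> + \<nu>)" 0 "2::real"] by simp
  qed (use assms(2,3) q in \<open>auto intro!: sum_nonneg\<close>)
  finally show ?thesis unfolding D_def D0[unfolded D_def] q_def by simp
qed

lemma young_loeve_le:
  fixes Y :: "real \<Rightarrow> 'a::real_normed_vector"
  assumes Iu: "has_young_integral Y \<omega> a u Iu" and Is: "has_young_integral Y \<omega> a s Is"
    and "a \<le> s" "s < u" "0 \<le> Ay" "0 \<le> Aw" "1 < \<beta> + \<nu>"
    and "\<And>v w. v \<in> {s..u} \<Longrightarrow> w \<in> {s..u} \<Longrightarrow> norm (Y v - Y w) \<le> Ay * \<bar>v - w\<bar> powr \<beta>"
    and "\<And>v w. v \<in> {s..u} \<Longrightarrow> w \<in> {s..u} \<Longrightarrow> \<bar>\<omega> v - \<omega> w\<bar> \<le> Aw * \<bar>v - w\<bar> powr \<nu>"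
  shows "norm (Iu - Is - (\<omega> u - \<omega> s) *\<^sub>R Y s) \<le> Ay * Aw * (u - s) powr (\<beta> + \<nu>) / (1 - 2 powr (1 - (\<beta> + \<nu>)))"
proof (rule field_le_epsilon)
  fix e :: real assume "0 < e"
  define h where "h = u - s"
  have h: "0 < h" "s + h = u" using assms(4) unfolding h_def by auto
  obtain \<delta> where \<delta>: "0 < \<delta>"
    and approx: "\<And>\<psi> k. fine_steps \<delta> s u \<psi> k \<Longrightarrow> norm (left_point_sum Y \<omega> \<psi> k - (Iu - Is)) < e"
    using young_integral_increment_approx[OF Iu Is \<open>a \<le> s\<close> \<open>0 < e\<close>] by blast
  obtain n :: nat where "h / \<delta> < 2 ^ n" using real_arch_pow[of 2 "h / \<delta>"] by auto
  then have "h / 2 ^ n < \<delta>" using \<delta> by (simp add: field_simps)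
  then have "fine_steps \<delta> s u (dyadic_points s h n) (2 ^ n)"
    using h unfolding fine_steps_def dyadic_points_def by (auto simp: field_simps)
  then have "norm (left_point_sum Y \<omega> (dyadic_points s h n) (2 ^ n) - (Iu - Is)) < e" by (rule approx)
  moreover have "norm (left_point_sum Y \<omega> (dyadic_points s h n) (2 ^ n) - (\<omega> u - \<omega> s) *\<^sub>R Y s)
      \<le> Ay * Aw * (u - s) powr (\<beta> + \<nu>) / (1 - 2 powr (1 - (\<beta> + \<nu>)))"
    using dyadic_left_point_sum_le[of h Ay Aw \<beta> \<nu> s Y \<omega> n] h assms(5-9) unfolding h_def by simp
  ultimately show "norm (Iu - Is - (\<omega> u - \<omega> s) *\<^sub>R Y s)
      \<le> Ay * Aw * (u - s) powr (\<beta> + \<nu>) / (1 - 2 powr (1 - (\<beta> + \<nu>))) + e"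
    using norm_diff_triangle_le[of "Iu - Is" "left_point_sum Y \<omega> (dyadic_points s h n) (2 ^ n)"]
    by (smt (verit) norm_minus_commute)
qed

section \<open>Stopping times\<close>

lemma powr_le_powr_mult_powr:
  fixes d e p q \<beta> :: real
  assumes "0 < d" "d \<le> e" "d \<le> 1" "0 \<le> q" "q \<le> p - \<beta>"
  shows "d powr p \<le> d powr \<beta> * e powr q"
proof -
  have "d powr p = d powr \<beta> * d powr (p - \<beta>)" by (simp flip: powr_add)
  also have "\<dots> \<le> d powr \<beta> * d powr q" using assms by (intro mult_left_mono powr_mono') auto
  also have "\<dots> \<le> d powr \<beta> * e powr q" using assms by (intro mult_left_mono powr_mono2) auto
  finally show ?thesis .
qed

lemma power_add_le_two_pow:
  fixes a b :: real
  assumes "0 \<le> a" "0 \<le> b" "1 \<le> k"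
  shows "(a + b) ^ k \<le> 2 ^ (k - 1) * (a ^ k + b ^ k)"
  using assms(3)
proof (induction k rule: dec_induct)
  case (step k)
  have "0 \<le> (a - b) * (a ^ k - b ^ k)"
    using assms power_mono[of a b k] power_mono[of b a k]
    by (cases "a \<le> b") (auto intro: mult_nonpos_nonpos)
  then have Chebyshev: "(a + b) * (a ^ k + b ^ k) \<le> 2 * (a ^ Suc k + b ^ Suc k)"
    by (simp add: algebra_simps)
  have "(a + b) ^ Suc k \<le> (a + b) * (2 ^ (k - 1) * (a ^ k + b ^ k))"
    using step.IH assms by (simp add: mult_left_mono)
  also have "\<dots> \<le> 2 ^ (k - 1) * (2 * (a ^ Suc k + b ^ Suc k))"
    using mult_left_mono[OF Chebyshev, of "2 ^ (k - 1)"] by (simp add: algebra_simps)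
  also have "\<dots> = 2 ^ (Suc k - 1) * (a ^ Suc k + b ^ Suc k)"
    using step.hyps by (cases k) auto
  finally show ?case .
qed simp

lemma powr_le_mult_powr:
  fixes d T p :: real
  assumes "0 \<le> d" "d \<le> T" "1 \<le> p"
  shows "d powr p \<le> d * T powr (p - 1)"
proof (cases "d = 0")
  case False
  then have "d powr p = d * d powr (p - 1)" using assms powr_mult_base[of d "p - 1"] by simp
  also have "\<dots> \<le> d * T powr (p - 1)" using assms by (intro mult_left_mono powr_mono2) auto
  finally show ?thesis .
qed simp

lemma continuous_on_powr_shift:
  fixes a b T p :: real
  assumes "a \<le> b" "0 < p"
  shows "continuous_on {b..T} (\<lambda>t. (t - a) powr p)"
  using assms by (intro continuous_on_powr' continuous_intros) auto

lemma finite_downset_eq_atLeastAtMost: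
  fixes D :: "nat set"
  assumes "finite D" "\<And>i. i \<in> D \<Longrightarrow> 1 \<le> i"
    and down: "\<And>i j. i \<in> D \<Longrightarrow> 1 \<le> j \<Longrightarrow> j \<le> i \<Longrightarrow> j \<in> D"
  shows "D = {1..card D}"
proof (cases "D = {}")
  case False
  define M where "M = Max D"
  have "M \<in> D" using assms(1) False unfolding M_def by simp
  moreover have "D \<subseteq> {1..M}" using assms(1,2) unfolding M_def by (auto intro: Max_ge)
  ultimately have "D = {1..M}" using down[of M] by auto
  then show ?thesis by simp
qed simp

declare stop_time.simps[simp del]

locale stopping_times =
  fixes C \<mu> \<beta> \<nu> T :: real and \<omega> :: "real \<Rightarrow> real"
  assumes C_pos: "0 < C" and mu_pos: "0 < \<mu>" and mu_less_C: "\<mu> < C"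
    and beta_less_nu: "\<beta> < \<nu>" and nu_le_1: "\<nu> \<le> 1"
    and T_pos: "0 < T" and omega_holder: "holder_on \<nu> 0 T \<omega>"
begin

definition control :: "real \<Rightarrow> real \<Rightarrow> real" where
  "control a t = C * ((t - a) powr (1 - \<beta>) + (t - a) powr (\<nu> - \<beta>) * hol_semi \<nu> a t \<omega>)"

abbreviation \<tau> :: "nat \<Rightarrow> real" where
  "\<tau> \<equiv> stop_time C \<mu> \<beta> \<nu> \<omega> T"

lemma stop_time_0: "\<tau> 0 = 0"
  by (simp add: stop_time.simps)

lemma stop_time_Suc: "\<tau> (Suc i) = Sup {t \<in> {\<tau> i..T}. control (\<tau> i) t \<le> \<mu>}"
  unfolding control_def by (simp add: stop_time.simps Let_def)

lemma control_mono:
  assumes "0 \<le> a" "a \<le> u" "u \<le> t" "t \<le> T"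
  shows "control a u \<le> control a t"
proof -
  have \<omega>: "holder_on \<nu> a t \<omega>" by (rule holder_on_subset[OF omega_holder]) (use assms in auto)
  have "(u - a) powr (\<nu> - \<beta>) * hol_semi \<nu> a u \<omega> \<le> (t - a) powr (\<nu> - \<beta>) * hol_semi \<nu> a t \<omega>"
    using assms beta_less_nu hol_semi_mono[OF \<omega>, of a u] hol_semi_nonneg[OF holder_on_subset[OF \<omega>, of a u]]
    by (intro mult_mono powr_mono2) auto
  moreover have "(u - a) powr (1 - \<beta>) \<le> (t - a) powr (1 - \<beta>)"
    using assms beta_less_nu nu_le_1 by (intro powr_mono2) auto
  ultimately show ?thesis unfolding control_def using C_pos by (intro mult_left_mono) auto
qed

lemma control_le_imp_less_one:
  assumes "0 \<le> a" "a \<le> u" "u \<le> T" "control a u \<le> \<mu>"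
  shows "u - a < 1"
proof (rule ccontr)
  assume "\<not> u - a < 1"
  then have "1 \<le> (u - a) powr (1 - \<beta>)" using beta_less_nu nu_le_1 by (intro ge_one_powr_ge_zero) auto
  moreover have "0 \<le> (u - a) powr (\<nu> - \<beta>) * hol_semi \<nu> a u \<omega>"
    using hol_semi_nonneg[OF holder_on_subset[OF omega_holder]] assms by simp
  ultimately have "C * 1 \<le> control a u"
    unfolding control_def using C_pos by (intro mult_left_mono) linarith+
  then show False using assms(4) mu_less_C by simp
qed

lemma stop_time_step:
  assumes "0 \<le> \<tau> i" "\<tau> i \<le> T"
  shows "\<tau> i \<in> {t \<in> {\<tau> i..T}. control (\<tau> i) t \<le> \<mu>}"
    and "bdd_above {t \<in> {\<tau> i..T}. control (\<tau> i) t \<le> \<mu>}"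
    and "\<tau> i \<le> \<tau> (Suc i)" "\<tau> (Suc i) \<le> T"
proof -
  show mem: "\<tau> i \<in> {t \<in> {\<tau> i..T}. control (\<tau> i) t \<le> \<mu>}"
    using assms mu_pos by (simp add: control_def)
  show bdd: "bdd_above {t \<in> {\<tau> i..T}. control (\<tau> i) t \<le> \<mu>}" by (rule bdd_aboveI[of _ T]) auto
  show "\<tau> i \<le> \<tau> (Suc i)" unfolding stop_time_Suc by (rule cSup_upper[OF mem bdd])
  show "\<tau> (Suc i) \<le> T" unfolding stop_time_Suc by (rule cSup_least) (use mem in auto)
qed

lemma stop_time_in_range: "0 \<le> \<tau> i \<and> \<tau> i \<le> T"
proof (induction i)
  case (Suc i)
  then show ?case using stop_time_step(3,4)[of i] by linarith
qed (use T_pos in \<open>simp add: stop_time_0\<close>)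

lemma stop_time_mono: "i \<le> j \<Longrightarrow> \<tau> i \<le> \<tau> j"
  by (induction j rule: dec_induct) (use stop_time_step stop_time_in_range order_trans in blast)+

lemma control_before_stop_time:
  assumes "\<tau> i \<le> u" "u < \<tau> (Suc i)"
  shows "control (\<tau> i) u \<le> \<mu>"
proof -
  note range = stop_time_in_range[of i]
  obtain t where t: "t \<in> {t \<in> {\<tau> i..T}. control (\<tau> i) t \<le> \<mu>}" "u < t"
    using less_cSupD[OF _ assms(2)[unfolded stop_time_Suc]] stop_time_step(1)[of i] range by blast
  then have "control (\<tau> i) u \<le> control (\<tau> i) t" using assms range by (intro control_mono) auto
  with t show ?thesis by simp
qed

text \<open>The control itself need not be continuous in t, so the seminorm of \<omega> is first enlarged to
  the one on [0,T]; the resulting function is continuous and exceeds \<mu> beyond the stopping time.\<close>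
lemma control_at_stop_time:
  assumes "\<tau> (Suc i) < T"
  shows "\<mu> \<le> C * ((\<tau> (Suc i) - \<tau> i) powr (1 - \<beta>) + (\<tau> (Suc i) - \<tau> i) powr (\<nu> - \<beta>) * hol_semi \<nu> 0 T \<omega>)"
proof -
  note range = stop_time_in_range[of i]
  define G where "G = (\<lambda>t. C * ((t - \<tau> i) powr (1 - \<beta>) + (t - \<tau> i) powr (\<nu> - \<beta>) * hol_semi \<nu> 0 T \<omega>))"
  have above: "\<mu> \<le> G t" if t: "t \<in> {\<tau> (Suc i)<..T}" for t
  proof -
    have "t \<notin> {t \<in> {\<tau> i..T}. control (\<tau> i) t \<le> \<mu>}"
    proof
      assume "t \<in> {t \<in> {\<tau> i..T}. control (\<tau> i) t \<le> \<mu>}"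
      then have "t \<le> \<tau> (Suc i)" unfolding stop_time_Suc by (rule cSup_upper[OF _ stop_time_step(2)[of i]]) (use range in auto)
      then show False using t by simp
    qed
    then have "\<mu> < control (\<tau> i) t" using t stop_time_step(3)[of i] range by auto
    also have "control (\<tau> i) t \<le> G t"
    proof -
      have "hol_semi \<nu> (\<tau> i) t \<omega> \<le> hol_semi \<nu> 0 T \<omega>"
        by (rule hol_semi_mono[OF omega_holder]) (use t range in auto)
      then show ?thesis
        unfolding control_def G_def using C_pos by (intro mult_left_mono add_left_mono) simp_all
    qed
    finally show ?thesis by simp
  qed
  have cont: "continuous_on {\<tau> (Suc i)..T} G"
    unfolding G_def using stop_time_step(3)[of i] range beta_less_nu nu_le_1
    by (intro continuous_on_mult continuous_on_add continuous_on_const continuous_on_powr_shift) auto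
  have closure: "closure {\<tau> (Suc i)<..T} = {\<tau> (Suc i)..T}" using assms by simp
  have "\<mu> \<le> G (\<tau> (Suc i))"
  proof (rule continuous_ge_on_closure[of "{\<tau> (Suc i)<..T}" G])
    show "continuous_on (closure {\<tau> (Suc i)<..T}) G" unfolding closure by (rule cont)
    show "\<tau> (Suc i) \<in> closure {\<tau> (Suc i)<..T}" unfolding closure using assms by simp
  qed (rule above)
  then show ?thesis unfolding G_def .
qed

lemma stop_interval_le:
  assumes "\<tau> (Suc j) < T" and k: "1 \<le> k" "1 \<le> real k * (\<nu> - \<beta>)"
  shows "(\<mu> / C) ^ k \<le> (\<tau> (Suc j) - \<tau> j) * (2 ^ (k - 1)
           * (T powr (real k * (1 - \<beta>) - 1) + T powr (real k * (\<nu> - \<beta>) - 1) * hol_semi \<nu> 0 T \<omega> ^ k))"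
proof -
  define W where "W = hol_semi \<nu> 0 T \<omega>"
  have W0: "0 \<le> W" unfolding W_def by (rule hol_semi_nonneg[OF omega_holder])
  define p1 where "p1 = real k * (1 - \<beta>)"
  define p2 where "p2 = real k * (\<nu> - \<beta>)"
  have p2: "1 \<le> p2" using k unfolding p2_def by simp
  moreover have "p2 \<le> p1" unfolding p1_def p2_def using nu_le_1 by (intro mult_left_mono) auto
  ultimately have p1: "1 \<le> p1" by simp
  define d where "d = \<tau> (Suc j) - \<tau> j"
  have gap: "\<mu> \<le> C * (d powr (1 - \<beta>) + d powr (\<nu> - \<beta>) * W)"
    unfolding d_def W_def using assms(1) by (rule control_at_stop_time)
  have d: "0 \<le> d" "d \<le> T"
    using stop_time_in_range[of j] stop_time_in_range[of "Suc j"] stop_time_step(3)[of j]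
    unfolding d_def by auto
  have "d \<noteq> 0" using gap mu_pos by auto
  with d have d_pos: "0 < d" by simp
  have "\<mu> / C \<le> d powr (1 - \<beta>) + d powr (\<nu> - \<beta>) * W" using gap C_pos by (simp add: field_simps)
  then have "(\<mu> / C) ^ k \<le> (d powr (1 - \<beta>) + d powr (\<nu> - \<beta>) * W) ^ k"
    using mu_pos C_pos by (intro power_mono) auto
  also have "\<dots> \<le> 2 ^ (k - 1) * ((d powr (1 - \<beta>)) ^ k + (d powr (\<nu> - \<beta>) * W) ^ k)"
    by (rule power_add_le_two_pow) (use W0 k in auto)
  also have "\<dots> = 2 ^ (k - 1) * (d powr p1 + d powr p2 * W ^ k)"
    unfolding p1_def p2_def using d_pos by (simp add: powr_power power_mult_distrib)
  also have "\<dots> \<le> 2 ^ (k - 1) * (d * T powr (p1 - 1) + d * T powr (p2 - 1) * W ^ k)"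
    using powr_le_mult_powr[OF d p1] powr_le_mult_powr[OF d p2] W0
    by (intro mult_left_mono add_mono mult_right_mono) auto
  finally show ?thesis unfolding d_def p1_def p2_def W_def by (simp add: algebra_simps)
qed

lemma stop_index_le:
  assumes m: "\<tau> m < T" and k: "1 \<le> k" "1 \<le> real k * (\<nu> - \<beta>)"
  shows "real m * (\<mu> / C) ^ k
    \<le> 2 ^ (k - 1) * (T powr (real k * (1 - \<beta>)) + T powr (real k * (\<nu> - \<beta>)) * hol_semi \<nu> 0 T \<omega> ^ k)"
proof -
  define B where "B = 2 ^ (k - 1)
    * (T powr (real k * (1 - \<beta>) - 1) + T powr (real k * (\<nu> - \<beta>) - 1) * hol_semi \<nu> 0 T \<omega> ^ k)"
  have "(\<mu> / C) ^ k \<le> (\<tau> (Suc j) - \<tau> j) * B" if "j < m" for j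
    unfolding B_def using stop_time_mono[of "Suc j" m] that m k by (intro stop_interval_le) auto
  then have "(\<Sum>j<m. (\<mu> / C) ^ k) \<le> (\<Sum>j<m. (\<tau> (Suc j) - \<tau> j) * B)" by (intro sum_mono) simp
  also have "\<dots> = (\<tau> m - \<tau> 0) * B" by (simp only: sum_distrib_right[symmetric] sum_lessThan_telescope)
  also have "\<dots> \<le> T * B"
    using stop_time_in_range[of m] hol_semi_nonneg[OF omega_holder]
    unfolding B_def stop_time_0 by (intro mult_right_mono) auto
  also have "T * B = 2 ^ (k - 1) * (T * T powr (real k * (1 - \<beta>) - 1)
      + T * T powr (real k * (\<nu> - \<beta>) - 1) * hol_semi \<nu> 0 T \<omega> ^ k)"
    unfolding B_def by (simp add: algebra_simps)
  also have "\<dots> = 2 ^ (k - 1) * (T powr (real k * (1 - \<beta>)) + T powr (real k * (\<nu> - \<beta>)) * hol_semi \<nu> 0 T \<omega> ^ k)"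
    using T_pos powr_mult_base[of T "real k * (1 - \<beta>) - 1"] powr_mult_base[of T "real k * (\<nu> - \<beta>) - 1"]
    by simp
  finally show ?thesis by simp
qed

lemma finite_stop_set:
  assumes "t \<le> T"
  shows "finite (stop_set C \<mu> \<beta> \<nu> \<omega> T t)"
proof -
  define k where "k = Suc (nat \<lceil>1 / (\<nu> - \<beta>)\<rceil>)"
  have "1 / (\<nu> - \<beta>) \<le> real k" unfolding k_def by linarith
  then have k: "1 \<le> k" "1 \<le> real k * (\<nu> - \<beta>)"
    using beta_less_nu by (simp_all add: k_def field_simps)
  define X where "X = 2 ^ (k - 1) * (T powr (real k * (1 - \<beta>)) + T powr (real k * (\<nu> - \<beta>)) * hol_semi \<nu> 0 T \<omega> ^ k)"
  have q: "0 < (\<mu> / C) ^ k" using mu_pos C_pos by simp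
  have "stop_set C \<mu> \<beta> \<nu> \<omega> T t \<subseteq> {..nat \<lceil>X / (\<mu> / C) ^ k\<rceil>}"
  proof
    fix i assume "i \<in> stop_set C \<mu> \<beta> \<nu> \<omega> T t"
    then have "\<tau> i < T" using assms unfolding stop_set_def by simp
    then have "real i * (\<mu> / C) ^ k \<le> X" unfolding X_def using k by (rule stop_index_le)
    then have "real i \<le> X / (\<mu> / C) ^ k" using q by (simp add: pos_le_divide_eq)
    then show "i \<in> {..nat \<lceil>X / (\<mu> / C) ^ k\<rceil>}" by (simp add: le_nat_iff le_ceiling_iff)
  qed
  then show ?thesis by (rule finite_subset) simp
qed

lemma stop_set_eq:
  assumes "t \<le> T"
  shows "stop_set C \<mu> \<beta> \<nu> \<omega> T t = {1..count_N C \<mu> \<beta> \<nu> \<omega> T t}"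
  unfolding count_N_def
proof (rule finite_downset_eq_atLeastAtMost[OF finite_stop_set[OF assms]])
  fix i j assume "i \<in> stop_set C \<mu> \<beta> \<nu> \<omega> T t" "1 \<le> j" "j \<le> i"
  then show "j \<in> stop_set C \<mu> \<beta> \<nu> \<omega> T t"
    unfolding stop_set_def using stop_time_mono[of j i] by auto
qed (simp add: stop_set_def)

lemma stop_time_count_N:
  assumes "0 \<le> t" "t \<le> T"
  shows "\<tau> (count_N C \<mu> \<beta> \<nu> \<omega> T t) \<le> t" "t \<le> \<tau> (Suc (count_N C \<mu> \<beta> \<nu> \<omega> T t))"
proof -
  define n where "n = count_N C \<mu> \<beta> \<nu> \<omega> T t"
  have eq: "stop_set C \<mu> \<beta> \<nu> \<omega> T t = {1..n}" using stop_set_eq[OF assms(2)] unfolding n_def .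
  show "\<tau> n \<le> t"
  proof (cases "n = 0")
    case False
    then have "n \<in> stop_set C \<mu> \<beta> \<nu> \<omega> T t" unfolding eq by simp
    then show ?thesis unfolding stop_set_def by simp
  qed (use assms in \<open>simp add: stop_time_0\<close>)
  show "t \<le> \<tau> (Suc n)"
  proof (rule ccontr)
    assume "\<not> t \<le> \<tau> (Suc n)"
    then have "Suc n \<in> stop_set C \<mu> \<beta> \<nu> \<omega> T t" unfolding stop_set_def by simp
    then show False unfolding eq by simp
  qed
qed

lemma count_N_le:
  assumes "1 \<le> k" "1 \<le> real k * (\<nu> - \<beta>)"
  shows "real (count_N C \<mu> \<beta> \<nu> \<omega> T T)
    \<le> 2 ^ (k - 1) * (C / \<mu>) ^ k * (T powr (real k * (1 - \<beta>)) + T powr (real k * (\<nu> - \<beta>)) * hol_semi \<nu> 0 T \<omega> ^ k)"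
proof -
  define n where "n = count_N C \<mu> \<beta> \<nu> \<omega> T T"
  define X where "X = 2 ^ (k - 1) * (T powr (real k * (1 - \<beta>)) + T powr (real k * (\<nu> - \<beta>)) * hol_semi \<nu> 0 T \<omega> ^ k)"
  have "real n * (\<mu> / C) ^ k \<le> X"
  proof (cases "n = 0")
    case True then show ?thesis
      unfolding X_def using hol_semi_nonneg[OF omega_holder] by simp
  next
    case False
    then have "n \<in> stop_set C \<mu> \<beta> \<nu> \<omega> T T" using stop_set_eq[of T] unfolding n_def by simp
    then have "\<tau> n < T" unfolding stop_set_def by simp
    then show ?thesis unfolding X_def using assms by (rule stop_index_le)
  qed
  then have "real n \<le> X / (\<mu> / C) ^ k" using mu_pos C_pos by (simp add: pos_le_divide_eq)
  also have "X / (\<mu> / C) ^ k = 2 ^ (k - 1) * (C / \<mu>) ^ k * (T powr (real k * (1 - \<beta>)) + T powr (real k * (\<nu> - \<beta>)) * hol_semi \<nu> 0 T \<omega> ^ k)"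
    unfolding X_def using mu_pos C_pos by (simp add: field_simps power_divide)
  finally show ?thesis unfolding n_def .
qed

end

section \<open>Gluing Hoelder bounds\<close>

lemma holder_bound_closed_right:
  fixes x :: "real \<Rightarrow> 'a::real_normed_vector"
  assumes x: "continuous_on {a..b} x" and "0 < \<beta>"
    and bound: "\<And>s u. a \<le> s \<Longrightarrow> s < u \<Longrightarrow> u < b \<Longrightarrow> norm (x u - x s) \<le> B * (u - s) powr \<beta>"
    and su: "a \<le> s" "s < u" "u \<le> b"
  shows "norm (x u - x s) \<le> B * (u - s) powr \<beta>"
proof (cases "u < b")
  case False
  with su have u: "u = b" by simp
  define \<phi> where "\<phi> = (\<lambda>v. norm (x v - x s) - B * (v - s) powr \<beta>)"
  have "continuous_on {s..b} x" using su by (intro continuous_on_subset[OF x]) auto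
  then have cont: "continuous_on {s..b} \<phi>"
    unfolding \<phi>_def using \<open>0 < \<beta>\<close>
    by (intro continuous_on_diff continuous_on_norm continuous_on_mult continuous_on_const
        continuous_on_powr_shift) auto
  have closure: "closure {s..<b} = {s..b}" using su u by simp
  have "\<phi> b \<le> 0"
  proof (rule continuous_le_on_closure[of "{s..<b}" \<phi>])
    show "continuous_on (closure {s..<b}) \<phi>" unfolding closure by (rule cont)
    show "b \<in> closure {s..<b}" unfolding closure using su u by simp
    fix v assume "v \<in> {s..<b}"
    then show "\<phi> v \<le> 0" using bound[of s v] su unfolding \<phi>_def by (cases "v = s") auto
  qed
  then show ?thesis unfolding \<phi>_def u by simp
qed (use bound su in auto)

lemma hol_semi_append_le:
  assumes x: "holder_on \<beta> c a x" and "0 \<le> \<beta>" "0 \<le> B"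
    and bound: "\<And>s u. a \<le> s \<Longrightarrow> s < u \<Longrightarrow> u \<le> b \<Longrightarrow> norm (x u - x s) \<le> B * (u - s) powr \<beta>"
  shows "hol_semi \<beta> c b x \<le> hol_semi \<beta> c a x + B"
proof (rule hol_semi_le)
  define S where "S = hol_semi \<beta> c a x"
  have S0: "0 \<le> S" unfolding S_def by (rule hol_semi_nonneg[OF x])
  then show "0 \<le> hol_semi \<beta> c a x + B" using \<open>0 \<le> B\<close> unfolding S_def by simp
  fix s u assume su: "c \<le> s" "s < u" "u \<le> b"
  consider "u \<le> a" | "a \<le> s" | "s < a" "a < u" by linarith
  then show "norm (x u - x s) \<le> (hol_semi \<beta> c a x + B) * (u - s) powr \<beta>"
  proof cases
    case 1
    then have "norm (x u - x s) \<le> S * (u - s) powr \<beta>"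
      unfolding S_def using su by (intro hol_semi_upper[OF x]) auto
    then show ?thesis using \<open>0 \<le> B\<close> unfolding S_def by (simp add: distrib_right add_increasing2)
  next
    case 2
    then have "norm (x u - x s) \<le> B * (u - s) powr \<beta>" using su by (intro bound) auto
    then show ?thesis using S0 unfolding S_def by (simp add: distrib_right add_increasing)
  next
    case 3
    have "norm (x u - x s) \<le> norm (x u - x a) + norm (x a - x s)"
      using norm_triangle_ineq[of "x u - x a" "x a - x s"] by simp
    also have "\<dots> \<le> B * (u - a) powr \<beta> + S * (a - s) powr \<beta>"
      unfolding S_def using su 3 by (intro add_mono bound hol_semi_upper[OF x]) auto
    also have "\<dots> \<le> B * (u - s) powr \<beta> + S * (u - s) powr \<beta>"
      using 3 S0 \<open>0 \<le> B\<close> \<open>0 \<le> \<beta>\<close> by (intro add_mono mult_left_mono powr_mono2) auto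
    finally show ?thesis unfolding S_def by (simp add: algebra_simps)
  qed
qed

lemma sup_norm_append_le:
  assumes x: "continuous_on {c..a} x" and "c \<le> a" "0 \<le> \<beta>" "0 \<le> B" "b - a \<le> 1"
    and bound: "\<And>v. a < v \<Longrightarrow> v \<le> b \<Longrightarrow> norm (x v - x a) \<le> B * (v - a) powr \<beta>"
  shows "sup_norm c b x \<le> sup_norm c a x + B"
proof (rule sup_norm_le)
  show "0 \<le> sup_norm c a x + B" using sup_norm_nonneg[OF x] \<open>0 \<le> B\<close> by simp
  fix v assume v: "v \<in> {c..b}"
  show "norm (x v) \<le> sup_norm c a x + B"
  proof (cases "v \<le> a")
    case True
    then show ?thesis using sup_norm_upper[OF x] v \<open>0 \<le> B\<close> by force
  next
    case False
    have "norm (x v) \<le> norm (x a) + norm (x v - x a)" by (rule norm_triangle_sub)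
    also have "\<dots> \<le> sup_norm c a x + B * 1"
    proof (rule add_mono)
      show "norm (x a) \<le> sup_norm c a x" using \<open>c \<le> a\<close> by (intro sup_norm_upper[OF x]) auto
      have "norm (x v - x a) \<le> B * (v - a) powr \<beta>" using False v by (intro bound) auto
      also have "\<dots> \<le> B * 1"
        using False v \<open>b - a \<le> 1\<close> \<open>0 \<le> B\<close> \<open>0 \<le> \<beta>\<close> by (intro mult_left_mono powr_le1) auto
      finally show "norm (x v - x a) \<le> B * 1" .
    qed
    finally show ?thesis by simp
  qed
qed

section \<open>The a priori estimate\<close>

locale delay_young_solution =
  fixes r T \<nu> \<beta> L_f L_g \<mu> :: real
    and \<omega> :: "real \<Rightarrow> real"
    and f g :: "(real \<Rightarrow> 'a::euclidean_space) \<Rightarrow> 'a"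
    and Dg :: "(real \<Rightarrow> 'a) \<Rightarrow> (real \<Rightarrow> 'a) \<Rightarrow> 'a"
    and \<eta> x :: "real \<Rightarrow> 'a"
  assumes r_pos: "r > 0" and T_pos: "T > 0"
    and nu_le_1: "\<nu> \<le> 1"
    and omega_holder: "holder_on \<nu> 0 T \<omega>"
    and beta_pos: "0 < \<beta>" and beta_less_nu: "\<beta> < \<nu>" and beta_nu: "\<beta> + \<nu> > 1"
    and H_f: "\<forall>\<xi> \<zeta>. in_Cr r \<xi> \<and> in_Cr r \<zeta> \<longrightarrow>
                 norm (f \<xi> - f \<zeta>) \<le> L_f * cr_norm r (\<lambda>u. \<xi> u - \<zeta> u)"
    and H_g1: "frechet_C1_Cr r g Dg"
    and H_g2: "\<forall>\<xi> h. in_Cr r \<xi> \<and> in_Cr r h \<longrightarrow> norm (Dg \<xi> h) \<le> L_g * cr_norm r h"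
    and x_holder: "holder_on \<beta> (-r) T x"
    and x_init: "\<forall>u\<in>{-r..0}. x u = \<eta> u"
    and x_sol: "\<forall>t\<in>{0..T}. \<exists>I. has_young_integral (\<lambda>s. g (seg x s)) \<omega> 0 t I \<and>
                  x t = \<eta> 0 + integral {0..t} (\<lambda>s. f (seg x s)) + I"
    and mu: "0 < \<mu>" "\<mu> < min 1 (2 * (norm (g (\<lambda>_. 0)) + max L_f (norm (f (\<lambda>_. 0)))
                         + L_g * (1 / (1 - 2 powr (1 - (\<nu> + \<beta>))) + 1)))"
begin

definition L' :: real where "L' = max L_f (norm (f (\<lambda>_. 0)))"
definition K :: real where "K = 1 / (1 - 2 powr (1 - (\<nu> + \<beta>)))"
definition C :: real where "C = 2 * (norm (g (\<lambda>_. 0)) + L' + L_g * (K + 1))"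

abbreviation A :: "real \<Rightarrow> real" where
  "A t \<equiv> hol_norm \<beta> (-r) t x"

lemma C_eq: "C = 2 * (norm (g (\<lambda>_. 0)) + max L_f (norm (f (\<lambda>_. 0)))
                      + L_g * (1 / (1 - 2 powr (1 - (\<nu> + \<beta>))) + 1))"
  unfolding C_def L'_def K_def ..

lemma mu_less_1: "\<mu> < 1" and mu_less_C: "\<mu> < C"
  using mu unfolding C_eq by auto

sublocale stopping_times C \<mu> \<beta> \<nu> T \<omega>
  using mu(1) mu_less_C beta_less_nu nu_le_1 T_pos omega_holder by unfold_locales auto

lemma L_g_nonneg: "0 \<le> L_g"
  by (rule operator_bound_nonneg[OF r_pos H_g2])

lemma K_pos: "0 < K"
proof -
  have "(2::real) powr (1 - (\<nu> + \<beta>)) < 2 powr 0" using beta_nu by (intro powr_less_mono) auto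
  then show ?thesis unfolding K_def by simp
qed

lemma L'_nonneg: "0 \<le> L'"
  unfolding L'_def by (simp add: le_max_iff_disj)

lemma x_holder_upto: "t \<le> T \<Longrightarrow> holder_on \<beta> (-r) t x"
  by (rule holder_on_subset[OF x_holder]) auto

lemma x_continuous_upto: "t \<le> T \<Longrightarrow> continuous_on {-r..t} x"
  using holder_on_imp_continuous_on[OF x_holder_upto beta_pos] .

lemma in_Cr_seg_x: "0 \<le> v \<Longrightarrow> v \<le> T \<Longrightarrow> in_Cr r (seg x v)"
  by (rule in_Cr_seg[OF x_continuous_upto[OF order_refl]])

lemma A_bounds:
  assumes "0 \<le> t" "t \<le> T"
  shows "0 \<le> sup_norm (-r) t x" "0 \<le> hol_semi \<beta> (-r) t x"
    "sup_norm (-r) t x \<le> A t" "hol_semi \<beta> (-r) t x \<le> A t" "0 \<le> A t"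
proof -
  show "0 \<le> sup_norm (-r) t x" using sup_norm_nonneg[OF x_continuous_upto[OF assms(2)]] .
  moreover show "0 \<le> hol_semi \<beta> (-r) t x" using hol_semi_nonneg[OF x_holder_upto[OF assms(2)]] .
  ultimately show "sup_norm (-r) t x \<le> A t" "hol_semi \<beta> (-r) t x \<le> A t" "0 \<le> A t"
    unfolding hol_norm_def by auto
qed

lemma A_mono:
  assumes "0 \<le> u" "u \<le> t" "t \<le> T"
  shows "A u \<le> A t"
proof -
  have "sup_norm (-r) u x \<le> sup_norm (-r) t x"
    using assms A_bounds[of t] sup_norm_upper[OF x_continuous_upto[OF assms(3)]]
    by (intro sup_norm_le) auto
  moreover have "hol_semi \<beta> (-r) u x \<le> hol_semi \<beta> (-r) t x"
    by (rule hol_semi_mono[OF x_holder_upto[OF assms(3)]]) (use assms in auto)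
  ultimately show ?thesis unfolding hol_norm_def by simp
qed

lemma cr_norm_seg_x_le: "0 \<le> v \<Longrightarrow> v \<le> t \<Longrightarrow> t \<le> T \<Longrightarrow> cr_norm r (seg x v) \<le> A t"
  using cr_norm_seg_le[OF x_continuous_upto] A_bounds(3)[of t] by fastforce

lemma drift_continuous: "continuous_on {0..T} (\<lambda>v. f (seg x v))"
proof (rule holder_bound_imp_continuous_on[OF beta_pos])
  fix s t assume st: "s \<in> {0..T}" "t \<in> {0..T}"
  have "norm (f (seg x t) - f (seg x s)) \<le> L_f * cr_norm r (\<lambda>u. seg x t u - seg x s u)"
    using H_f in_Cr_seg_x st by auto
  also have "\<dots> \<le> \<bar>L_f\<bar> * cr_norm r (\<lambda>u. seg x t u - seg x s u)"
    using st in_Cr_seg_x unfolding in_Cr_def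
    by (intro mult_right_mono cr_norm_nonneg) (auto simp: in_Cr_def intro!: continuous_intros)
  also have "\<dots> \<le> \<bar>L_f\<bar> * (hol_semi \<beta> (-r) T x * \<bar>t - s\<bar> powr \<beta>)"
    by (intro mult_left_mono cr_norm_seg_diff_le[OF x_holder]) (use st in auto)
  finally show "norm (f (seg x t) - f (seg x s)) \<le> \<bar>L_f\<bar> * hol_semi \<beta> (-r) T x * \<bar>t - s\<bar> powr \<beta>"
    by (simp add: mult.assoc)
qed

lemma drift_increment_le:
  assumes "0 \<le> s" "s \<le> u" "u \<le> T"
  shows "norm (integral {s..u} (\<lambda>v. f (seg x v))) \<le> L' * (1 + A u) * (u - s)"
proof (rule integral_bound[OF assms(2)])
  show "continuous_on {s..u} (\<lambda>v. f (seg x v))"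
    by (rule continuous_on_subset[OF drift_continuous]) (use assms in auto)
  fix v assume v: "v \<in> {s..u}"
  then have seg: "in_Cr r (seg x v)" "cr_norm r (seg x v) \<le> A u"
    using assms in_Cr_seg_x cr_norm_seg_x_le by auto
  have "norm (f (seg x v)) \<le> norm (f (\<lambda>_. 0)) + L_f * cr_norm r (seg x v)"
    by (rule lipschitz_norm_le[OF H_f seg(1)])
  also have "\<dots> \<le> L' + L' * A u"
    using seg cr_norm_nonneg[OF seg(1)] L'_nonneg unfolding L'_def
    by (intro add_mono order_trans[OF mult_right_mono mult_left_mono]) auto
  finally show "norm (f (seg x v)) \<le> L' * (1 + A u)" by (simp add: algebra_simps)
qed

lemma noise_increment_le:
  assumes a: "0 \<le> a" "a \<le> s" "s < u" "u \<le> T"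
    and Iu: "has_young_integral (\<lambda>v. g (seg x v)) \<omega> 0 u Iu"
    and Is: "has_young_integral (\<lambda>v. g (seg x v)) \<omega> 0 s Is"
  defines "W \<equiv> hol_semi \<nu> a u \<omega>" and "S \<equiv> hol_semi \<beta> (-r) u x"
  shows "norm (Iu - Is) \<le> W * (u - s) powr \<nu> * (norm (g (\<lambda>_. 0)) + L_g * A u)
                          + K * L_g * S * W * (u - s) powr (\<beta> + \<nu>)"
proof -
  define Y where "Y = (\<lambda>v. g (seg x v))"
  have \<omega>: "holder_on \<nu> a u \<omega>" by (rule holder_on_subset[OF omega_holder]) (use a in auto)
  have W0: "0 \<le> W" and S0: "0 \<le> S"
    unfolding W_def S_def using hol_semi_nonneg[OF \<omega>] A_bounds(2)[of u] a by auto
  have \<omega>_incr: "\<bar>\<omega> v - \<omega> w\<bar> \<le> W * \<bar>v - w\<bar> powr \<nu>" if "v \<in> {s..u}" "w \<in> {s..u}" for v w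
    using hol_semi_upper_abs[OF \<omega>, of w v] that a unfolding W_def by auto
  have Y_incr: "norm (Y v - Y w) \<le> (L_g * S) * \<bar>v - w\<bar> powr \<beta>" if "v \<in> {s..u}" "w \<in> {s..u}" for v w
  proof -
    have "norm (Y v - Y w) \<le> L_g * cr_norm r (\<lambda>t. seg x v t - seg x w t)"
      unfolding Y_def using that a by (intro frechet_C1_Cr_lipschitz[OF H_g1 H_g2] in_Cr_seg_x) auto
    also have "\<dots> \<le> L_g * (S * \<bar>v - w\<bar> powr \<beta>)" unfolding S_def
      using that a by (intro mult_left_mono cr_norm_seg_diff_le[OF x_holder_upto] L_g_nonneg) auto
    finally show ?thesis by (simp add: mult.assoc)
  qed
  have "norm (Iu - Is - (\<omega> u - \<omega> s) *\<^sub>R Y s)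
      \<le> (L_g * S) * W * (u - s) powr (\<beta> + \<nu>) / (1 - 2 powr (1 - (\<beta> + \<nu>)))"
    using Iu Is a S0 L_g_nonneg W0 beta_nu Y_incr \<omega>_incr unfolding Y_def
    by (intro young_loeve_le[where a = 0]) auto
  also have "\<dots> = K * L_g * S * W * (u - s) powr (\<beta> + \<nu>)" unfolding K_def by (simp add: add.commute)
  finally have young: "norm (Iu - Is - (\<omega> u - \<omega> s) *\<^sub>R Y s) \<le> K * L_g * S * W * (u - s) powr (\<beta> + \<nu>)" .
  have "norm (Y s - g (\<lambda>_. 0)) \<le> L_g * cr_norm r (\<lambda>t. seg x s t - 0)"
    unfolding Y_def using a by (intro frechet_C1_Cr_lipschitz[OF H_g1 H_g2] in_Cr_seg_x) (auto simp: in_Cr_def)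
  also have "\<dots> \<le> L_g * A u" using cr_norm_seg_x_le[of s u] a L_g_nonneg by (intro mult_left_mono) auto
  finally have "norm (Y s) \<le> norm (g (\<lambda>_. 0)) + L_g * A u"
    using norm_triangle_ineq2[of "Y s" "g (\<lambda>_. 0)"] by linarith
  then have "norm ((\<omega> u - \<omega> s) *\<^sub>R Y s) \<le> W * (u - s) powr \<nu> * (norm (g (\<lambda>_. 0)) + L_g * A u)"
    using \<omega>_incr[of u s] a by (simp add: mult_mono)
  with young show ?thesis using norm_triangle_ineq[of "Iu - Is - (\<omega> u - \<omega> s) *\<^sub>R Y s" "(\<omega> u - \<omega> s) *\<^sub>R Y s"]
    by simp
qed

text \<open>Since d \<le> e < 1, each of d, d^\<nu> and d^(\<beta>+\<nu>) is at most d^\<beta> times e^(1-\<beta>) or e^(\<nu>-\<beta>);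
  the constant C was chosen to dominate the resulting coefficients.\<close>
lemma increment_coefficients_le:
  assumes d: "0 < d" "d \<le> e" "e < 1" and W: "0 \<le> W" and S: "0 \<le> S" "S \<le> A'"
    and control: "C * (e powr (1 - \<beta>) + e powr (\<nu> - \<beta>) * W) \<le> \<mu>"
  shows "L' * (1 + A') * d + W * d powr \<nu> * (norm (g (\<lambda>_. 0)) + L_g * A')
           + K * L_g * S * W * d powr (\<beta> + \<nu>) \<le> \<mu> / 2 * (1 + A') * d powr \<beta>"
proof -
  define R where "R = d powr \<beta>"
  define P where "P = e powr (1 - \<beta>)"
  define Q where "Q = e powr (\<nu> - \<beta>)"
  define n\<^sub>g where "n\<^sub>g = norm (g (\<lambda>_. 0))"
  have R0: "0 \<le> R" "0 \<le> P" "0 \<le> Q" unfolding R_def P_def Q_def by auto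
  have A0: "0 \<le> A'" using S by simp
  have "d powr 1 \<le> R * P" unfolding R_def P_def
    using d beta_less_nu nu_le_1 by (intro powr_le_powr_mult_powr) auto
  then have p1: "d \<le> R * P" using d by simp
  have p2: "d powr \<nu> \<le> R * Q" unfolding R_def Q_def
    using d beta_less_nu by (intro powr_le_powr_mult_powr) auto
  have p3: "d powr (\<beta> + \<nu>) \<le> R * Q" unfolding R_def Q_def
    using d beta_less_nu beta_pos by (intro powr_le_powr_mult_powr) auto
  have "L' * (1 + A') * d + W * d powr \<nu> * (n\<^sub>g + L_g * A') + K * L_g * S * W * d powr (\<beta> + \<nu>)
      \<le> L' * (1 + A') * (R * P) + W * (R * Q) * ((n\<^sub>g + L_g) * (1 + A')) + K * L_g * (1 + A') * W * (R * Q)"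
  proof (intro add_mono)
    show "L' * (1 + A') * d \<le> L' * (1 + A') * (R * P)" using p1 L'_nonneg A0 by (intro mult_left_mono) auto
    show "W * d powr \<nu> * (n\<^sub>g + L_g * A') \<le> W * (R * Q) * ((n\<^sub>g + L_g) * (1 + A'))"
      using p2 W R0 A0 L_g_nonneg unfolding n\<^sub>g_def by (intro mult_mono mult_left_mono) (auto simp: algebra_simps)
    show "K * L_g * S * W * d powr (\<beta> + \<nu>) \<le> K * L_g * (1 + A') * W * (R * Q)"
      using K_pos L_g_nonneg S W p3 R0 by (intro mult_mono) (auto intro!: mult_nonneg_nonneg)
  qed
  also have "\<dots> = R * (1 + A') * (L' * P + W * Q * (n\<^sub>g + L_g + K * L_g))" by (simp add: algebra_simps)
  also have "\<dots> \<le> R * (1 + A') * (C / 2 * (P + W * Q))"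
  proof -
    have "L' \<le> C / 2" "n\<^sub>g + L_g + K * L_g \<le> C / 2"
      unfolding C_def n\<^sub>g_def using L'_nonneg L_g_nonneg K_pos by (simp_all add: algebra_simps)
    then have "L' * P + W * Q * (n\<^sub>g + L_g + K * L_g) \<le> C / 2 * P + W * Q * (C / 2)"
      using R0 W by (intro add_mono mult_right_mono mult_left_mono) auto
    then show ?thesis using R0 A0 by (intro mult_left_mono) (auto simp: algebra_simps)
  qed
  also have "\<dots> \<le> R * (1 + A') * (\<mu> / 2)"
    using control R0 A0 unfolding P_def Q_def by (intro mult_left_mono) (simp_all add: mult.commute)
  finally show ?thesis unfolding R_def n\<^sub>g_def by (simp add: algebra_simps)
qed

lemma increment_le:
  assumes a: "0 \<le> a" "a \<le> s" "s < u" "u \<le> T" and "control a u \<le> \<mu>"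
  shows "norm (x u - x s) \<le> \<mu> / 2 * (1 + A u) * (u - s) powr \<beta>"
proof -
  define F where "F = (\<lambda>v. f (seg x v))"
  obtain Iu where Iu: "has_young_integral (\<lambda>v. g (seg x v)) \<omega> 0 u Iu" and xu: "x u = \<eta> 0 + integral {0..u} F + Iu"
    using x_sol a unfolding F_def by force
  obtain Is where Is: "has_young_integral (\<lambda>v. g (seg x v)) \<omega> 0 s Is" and xs: "x s = \<eta> 0 + integral {0..s} F + Is"
    using x_sol a unfolding F_def by force
  have "integral {0..s} F + integral {s..u} F = integral {0..u} F"
    using a integrable_continuous_interval[OF continuous_on_subset[OF drift_continuous]] unfolding F_def
    by (intro Henstock_Kurzweil_Integration.integral_combine) auto
  then have "x u - x s = integral {s..u} F + (Iu - Is)" unfolding xu xs by (simp add: algebra_simps)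
  then have "norm (x u - x s) \<le> norm (integral {s..u} F) + norm (Iu - Is)" by (simp add: norm_triangle_ineq)
  also have "\<dots> \<le> L' * (1 + A u) * (u - s) + (hol_semi \<nu> a u \<omega> * (u - s) powr \<nu> * (norm (g (\<lambda>_. 0)) + L_g * A u)
                + K * L_g * hol_semi \<beta> (-r) u x * hol_semi \<nu> a u \<omega> * (u - s) powr (\<beta> + \<nu>))"
    unfolding F_def using a by (intro add_mono drift_increment_le noise_increment_le[OF a Iu Is]) auto
  also have "\<dots> \<le> \<mu> / 2 * (1 + A u) * (u - s) powr \<beta>"
  proof -
    have \<omega>: "holder_on \<nu> a u \<omega>" by (rule holder_on_subset[OF omega_holder]) (use a in auto)
    have "u - a < 1" by (rule control_le_imp_less_one) (use a assms(5) in auto)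
    then show ?thesis
      using assms(5) a A_bounds(2,4)[of u] hol_semi_nonneg[OF \<omega>] unfolding control_def
      by (intro order_trans[OF _ increment_coefficients_le[of "u - s" "u - a"]]) auto
  qed
  finally show ?thesis .
qed

lemma hol_norm_step:
  assumes a: "0 \<le> a" "a \<le> b" "b \<le> T"
    and below: "\<And>u. a \<le> u \<Longrightarrow> u < b \<Longrightarrow> control a u \<le> \<mu>"
  shows "(1 + A b) * (1 - \<mu>) \<le> 1 + A a"
proof (cases "a = b")
  case True
  then show ?thesis using A_bounds(5)[of a] a mu(1) by (simp add: mult_left_le)
next
  case False
  define B where "B = \<mu> / 2 * (1 + A b)"
  have B0: "0 \<le> B" unfolding B_def using A_bounds(5)[of b] a mu(1) by simp
  have increment_open: "norm (x u - x s) \<le> B * (u - s) powr \<beta>" if "a \<le> s" "s < u" "u < b" for s u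
  proof -
    have "norm (x u - x s) \<le> \<mu> / 2 * (1 + A u) * (u - s) powr \<beta>"
      using that a below[of u] by (intro increment_le) auto
    also have "\<dots> \<le> B * (u - s) powr \<beta>" unfolding B_def
      using A_mono[of u b] that a mu(1) by (intro mult_right_mono mult_left_mono) auto
    finally show ?thesis .
  qed
  have cont: "continuous_on {a..b} x" using a r_pos by (intro continuous_on_subset[OF x_continuous_upto[OF a(3)]]) auto
  have increment: "norm (x u - x s) \<le> B * (u - s) powr \<beta>" if "a \<le> s" "s < u" "u \<le> b" for s u
    using holder_bound_closed_right[OF cont beta_pos increment_open that] .
  have "b - a \<le> 1"
  proof (rule ccontr)
    assume "\<not> b - a \<le> 1"
    then have "control a (a + 1) \<le> \<mu>" using below[of "a + 1"] by simp
    then show False using control_le_imp_less_one[of a "a + 1"] a \<open>\<not> b - a \<le> 1\<close> by auto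
  qed
  then have "sup_norm (-r) b x \<le> sup_norm (-r) a x + B"
    using a r_pos beta_pos B0
    by (intro sup_norm_append_le[where \<beta> = \<beta>, OF x_continuous_upto] increment) auto
  moreover have "hol_semi \<beta> (-r) b x \<le> hol_semi \<beta> (-r) a x + B"
    using a beta_pos B0 by (intro hol_semi_append_le[OF x_holder_upto] increment) auto
  ultimately have "A b \<le> A a + 2 * B" unfolding hol_norm_def by simp
  then show ?thesis unfolding B_def by (simp add: algebra_simps)
qed

lemma hol_norm_at_stop_time: "(1 + A (\<tau> n)) * (1 - \<mu>) ^ n \<le> 1 + A 0"
proof (induction n)
  case (Suc n)
  have "(1 + A (\<tau> (Suc n))) * (1 - \<mu>) \<le> 1 + A (\<tau> n)"
    using stop_time_in_range[of n] stop_time_in_range[of "Suc n"] stop_time_step(3)[of n]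
    by (intro hol_norm_step control_before_stop_time) auto
  then have "(1 + A (\<tau> (Suc n))) * (1 - \<mu>) ^ Suc n \<le> (1 + A (\<tau> n)) * (1 - \<mu>) ^ n"
    using mu_less_1 by (simp add: mult_right_mono mult.assoc[symmetric])
  with Suc.IH show ?case by linarith
qed (simp add: stop_time_0)

lemma A_0: "A 0 = hol_norm \<beta> (-r) 0 \<eta>"
  using x_init sup_norm_cong[of "-r" 0 x \<eta>] hol_semi_cong[of "-r" 0 x \<eta>] unfolding hol_norm_def by simp

lemma hol_norm_seg_le_count:
  assumes "0 \<le> t" "t \<le> T"
  shows "hol_norm \<beta> (-r) 0 (seg x t)
    \<le> inverse ((1 - \<mu>) ^ (count_N C \<mu> \<beta> \<nu> \<omega> T t + 1)) * (hol_norm \<beta> (-r) 0 \<eta> + 1)"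
proof -
  define n where "n = count_N C \<mu> \<beta> \<nu> \<omega> T t"
  have "(1 + A t) * (1 - \<mu>) \<le> 1 + A (\<tau> n)"
    using stop_time_count_N[OF assms] stop_time_in_range[of n] assms unfolding n_def
    by (intro hol_norm_step control_before_stop_time) auto
  then have "(1 + A t) * (1 - \<mu>) ^ (n + 1) \<le> (1 + A (\<tau> n)) * (1 - \<mu>) ^ n"
    using mu_less_1 by (simp add: mult_right_mono mult.assoc[symmetric])
  also have "\<dots> \<le> 1 + hol_norm \<beta> (-r) 0 \<eta>" using hol_norm_at_stop_time[of n] A_0 by simp
  finally have bound: "(1 + A t) * (1 - \<mu>) ^ (n + 1) \<le> 1 + hol_norm \<beta> (-r) 0 \<eta>" .
  have "hol_norm \<beta> (-r) 0 (seg x t) \<le> 1 + A t"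
    using hol_norm_seg_le[OF x_holder_upto[OF assms(2)] assms(1) beta_pos] by simp
  also have "\<dots> \<le> (1 + hol_norm \<beta> (-r) 0 \<eta>) / (1 - \<mu>) ^ (n + 1)"
    using bound mu_less_1 by (simp add: pos_le_divide_eq)
  finally show ?thesis unfolding n_def by (simp add: field_simps)
qed

end

theorem theorem2:
  fixes r T \<nu> \<delta> \<beta> L_f L_g \<mu> :: real
    and \<omega> :: "real \<Rightarrow> real"
    and f g :: "(real \<Rightarrow> 'a::euclidean_space) \<Rightarrow> 'a"
    and Dg :: "(real \<Rightarrow> 'a) \<Rightarrow> (real \<Rightarrow> 'a) \<Rightarrow> 'a"
    and \<eta> x :: "real \<Rightarrow> 'a"
  assumes r_pos: "r > 0" and T_pos: "T > 0"
    and nu: "1/2 < \<nu>" "\<nu> \<le> 1"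
    and omega_hol: "holder_on \<nu> 0 T \<omega>"
    and omega_little: "\<forall>\<epsilon>>0. \<exists>h>0. \<forall>s t. 0 \<le> s \<and> s < t \<and> t \<le> T \<and> t - s \<le> h \<longrightarrow>
                         \<bar>\<omega> t - \<omega> s\<bar> / (t - s) powr \<nu> \<le> \<epsilon>"
    and delta: "(1 - \<nu>) / \<nu> < \<delta>" "\<delta> \<le> 1"
    and beta: "0 < \<beta>" "\<beta> < \<nu>" "\<beta> * \<delta> + \<nu> > 1"
    and H_f: "\<forall>\<xi> \<zeta>. in_Cr r \<xi> \<and> in_Cr r \<zeta> \<longrightarrow>
                 norm (f \<xi> - f \<zeta>) \<le> L_f * cr_norm r (\<lambda>u. \<xi> u - \<zeta> u)"
    and H_g1: "frechet_C1_Cr r g Dg"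
    and H_g2: "\<forall>\<xi> h. in_Cr r \<xi> \<and> in_Cr r h \<longrightarrow> norm (Dg \<xi> h) \<le> L_g * cr_norm r h"
    and H_g3: "\<forall>M>0. \<exists>L_M. \<forall>\<xi> \<zeta> h. in_Cr r \<xi> \<and> in_Cr r \<zeta> \<and> in_Cr r h \<and>
                 cr_norm r \<xi> \<le> M \<and> cr_norm r \<zeta> \<le> M \<longrightarrow>
                 norm (Dg \<xi> h - Dg \<zeta> h) \<le> L_M * cr_norm r (\<lambda>u. \<xi> u - \<zeta> u) powr \<delta> * cr_norm r h"
    and eta_hol: "holder_on \<beta> (-r) 0 \<eta>"
    and x_hol: "holder_on \<beta> (-r) T x"
    and x_init: "\<forall>u\<in>{-r..0}. x u = \<eta> u"
    and x_sol: "\<forall>t\<in>{0..T}. \<exists>I. has_young_integral (\<lambda>s. g (seg x s)) \<omega> 0 t I \<and>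
                  x t = \<eta> 0 + integral {0..t} (\<lambda>s. f (seg x s)) + I"
    and mu: "0 < \<mu>" "\<mu> < min 1 (2 * (norm (g (\<lambda>_. 0)) + max L_f (norm (f (\<lambda>_. 0)))
                         + L_g * (1 / (1 - 2 powr (1 - (\<nu> + \<beta>))) + 1)))"
  shows "let C = 2 * (norm (g (\<lambda>_. 0)) + max L_f (norm (f (\<lambda>_. 0)))
                      + L_g * (1 / (1 - 2 powr (1 - (\<nu> + \<beta>))) + 1)) in
         (\<forall>t\<in>{0..T}. finite (stop_set C \<mu> \<beta> \<nu> \<omega> T t) \<and>
            hol_norm \<beta> (-r) 0 (seg x t)
              \<le> inverse ((1 - \<mu>) ^ (count_N C \<mu> \<beta> \<nu> \<omega> T t + 1)) * (hol_norm \<beta> (-r) 0 \<eta> + 1))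
       \<and> (\<forall>k::nat. 1 \<le> k \<and> real k * (\<nu> - \<beta>) \<ge> 1 \<longrightarrow>
            real (count_N C \<mu> \<beta> \<nu> \<omega> T T)
              \<le> 2 ^ (k - 1) * (C / \<mu>) ^ k
                 * (T powr (real k * (1 - \<beta>)) + T powr (real k * (\<nu> - \<beta>)) * hol_semi \<nu> 0 T \<omega> ^ k))"
proof -
  \<comment> \<open>omega_little, H_g3, eta_hol and the lower bounds on \<nu> and \<delta> only serve existence and
    uniqueness of the solution; the estimate needs just \<beta> + \<nu> > 1.\<close>
  have "\<beta> * \<delta> \<le> \<beta>" using beta(1) delta(2) by (simp add: mult_left_le)
  then have "\<beta> + \<nu> > 1" using beta(3) by linarith
  then interpret delay_young_solution r T \<nu> \<beta> L_f L_g \<mu> \<omega> f g Dg \<eta> x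
    using r_pos T_pos nu(2) omega_hol beta(1,2) H_f H_g1 H_g2 x_hol x_init x_sol mu by unfold_locales
  show ?thesis
    unfolding Let_def C_eq[symmetric] using finite_stop_set hol_norm_seg_le_count count_N_le by auto
qed

end
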